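(* Let $b\ge2$ be an integer, $\lambda\in(1/b,1)$, and let $\phi$ be a real analytic $\mathbb{Z}$-periodic function satisfying condition (H). Then there exist positive integers $\ell_0,Q_0$ and a constant $\rho_0>0$ such that for every $n\in\mathbb{Z}_+$ and all $\mathbf{u},\mathbf{v}\in\Sigma$ with $u_n\ne v_n$: $\sup_{x\in[0,1)}|Y(x,\mathbf{u})-Y(x,\mathbf{v})|\ge\rho_0 b^{-Q_0n}$, and $\sum_{I\in\mathcal{L}_{\ell_0},\,I\subset[0,1)}\ \inf_{x\in I}|Y(x,\mathbf{u})-Y(x,\mathbf{v})|\ \ge\ \rho_0\sup_{x\in[0,1]}|Y(x,\mathbf{u})-Y(x,\mathbf{v})|.$
   Context: $\Lambda=\{0,\dots,b-1\}$, $\Sigma=\Lambda^{\mathbb{Z}_+}$, $\mathbf{u}=u_1u_2\cdots$. $\gamma=1/(b\lambda)$, $Y(x,\mathbf{j})=-\sum_{n\ge1}\gamma^n\phi'\!\left(\frac{x}{b^n}+\frac{j_1}{b^n}+\frac{j_2}{b^{n-1}}+\cdots+\frac{j_n}{b}\right)$ (this is the derivative of $\Gamma_{\mathbf{j}}(x)=\int_0^xY(t,\mathbf{j})dt$). Condition (H): $Y(\cdot,\mathbf{j})-Y(\cdot,\mathbf{i})\not\equiv0$ for all $\mathbf{i}\ne\mathbf{j}\in\Sigma$. $\mathcal{L}_\ell$ is the partition of $\mathbb{R}$ into intervals $[j/b^\ell,(j+1)/b^\ell)$, $j\in\mathbb{Z}$. *)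

theory Defs
  imports "HOL-Analysis.Analysis"
begin

definition real_analytic_on :: "real set \<Rightarrow> (real \<Rightarrow> real) \<Rightarrow> bool" where
  "real_analytic_on S f \<longleftrightarrow>
     (\<forall>x\<in>S. \<exists>r>0. \<exists>c::nat \<Rightarrow> real. \<forall>y. \<bar>y - x\<bar> < r \<longrightarrow> (\<lambda>n. c n * (y - x) ^ n) sums f y)"

text \<open>Sigma = Lambda^{Z_+}: sequences indexed by positive integers (position 0 is unused and
  normalised to 0) with digits in {0,...,b-1}.\<close>
definition Sigma :: "nat \<Rightarrow> (nat \<Rightarrow> nat) set" where
  "Sigma b = {j. j 0 = 0 \<and> (\<forall>k\<ge>1. j k < b)}"

definition Yfun :: "nat \<Rightarrow> real \<Rightarrow> (real \<Rightarrow> real) \<Rightarrow> real \<Rightarrow> (nat \<Rightarrow> nat) \<Rightarrow> real" where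
  "Yfun b lam \<phi> x j =
     - (\<Sum>m. (1 / (real b * lam)) ^ (Suc m) *
          deriv \<phi> (x / real b ^ (Suc m) + (\<Sum>k=1..Suc m. real (j k) / real b ^ (Suc m + 1 - k))))"

definition condH :: "nat \<Rightarrow> real \<Rightarrow> (real \<Rightarrow> real) \<Rightarrow> bool" where
  "condH b lam \<phi> \<longleftrightarrow>
     (\<forall>i\<in>Sigma b. \<forall>j\<in>Sigma b. i \<noteq> j \<longrightarrow> (\<exists>x. Yfun b lam \<phi> x j - Yfun b lam \<phi> x i \<noteq> 0))"

end

theory Submission
  imports Defs "HOL-Library.Periodic_Fun"
begin

text \<open>Since \<open>\<phi>\<close> is analytic and periodic, its derivatives obey uniform Cauchy estimates, so
  \<open>Y(\<cdot>, u) - Y(\<cdot>, v)\<close> has derivatives of all orders with the same kind of estimates; by the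
  identity theorem and condition (H) they cannot all vanish at one point. Compactness of the set of
  pairs \<open>u, v\<close> differing in the first digit then gives \<open>K\<close>, \<open>\<delta>\<close>, \<open>\<eta>\<close> such that near every point of
  \<open>[0, 1]\<close> some derivative of order \<open>\<le> K\<close> keeps one sign and has modulus \<open>\<ge> \<delta>\<close>.

  If \<open>u\<close> and \<open>v\<close> first differ in digit \<open>p + 1\<close>, self-similarity rescales this bound to
  \<open>\<gamma>^p b^(-p k) \<delta> \<ge> b^(-(K + 1) p) \<delta>\<close>. A function whose \<open>k\<close>-th derivative is \<open>\<ge> c\<close> on an interval
  is \<open>\<ge> c l^k\<close> on all but \<open>3 (2^k - 1)\<close> cells of length \<open>l\<close>, which gives the first inequality. For
  the second, near a maximum point of \<open>\<bar>Y(\<cdot>, u) - Y(\<cdot>, v)\<bar>\<close> one finds a derivative of order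
  \<open>j \<le> K\<close> of fixed sign and of size comparable to the maximum on a subinterval of fixed length; a
  \<open>b\<close>-adic cell of level \<open>\<ell>\<^sub>0\<close> inside it then carries a proportional lower bound.\<close>

section \<open>Mean value estimates and small cells\<close>

lemma DERIV_diff_ge:
  fixes f f' :: "real \<Rightarrow> real"
  assumes d: "\<And>x. (f has_real_derivative f' x) (at x)"
    and S: "is_interval S" and xS: "x \<in> S" and yS: "y \<in> S" and xy: "x \<le> y"
    and lo: "\<And>z. z \<in> S \<Longrightarrow> c \<le> f' z"
  shows "c * (y - x) \<le> f y - f x"
proof (cases "x = y")
  case False
  hence lt: "x < y" using xy by simp
  from MVT2[OF lt, of f f'] d obtain z where z: "x < z" "z < y" "f y - f x = (y - x) * f' z"
    by blast
  have "z \<in> S" using S xS yS z unfolding is_interval_1 by (meson less_imp_le)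
  thus ?thesis using lo z lt by (simp add: mult.commute mult_right_mono)
qed simp

lemma DERIV_abs_diff_le:
  fixes f f' :: "real \<Rightarrow> real"
  assumes d: "\<And>x. (f has_real_derivative f' x) (at x)"
    and S: "is_interval S" and xS: "x \<in> S" and yS: "y \<in> S"
    and hi: "\<And>z. z \<in> S \<Longrightarrow> \<bar>f' z\<bar> \<le> H"
  shows "\<bar>f y - f x\<bar> \<le> H * \<bar>y - x\<bar>"
proof -
  have *: "\<bar>f q - f p\<bar> \<le> H * \<bar>q - p\<bar>" if "p \<in> S" "q \<in> S" "p < q" for p q
  proof -
    from MVT2[OF \<open>p < q\<close>, of f f'] d obtain z where z: "p < z" "z < q" "f q - f p = (q - p) * f' z"
      by blast
    have "z \<in> S" using S that z unfolding is_interval_1 by (meson less_imp_le)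
    thus ?thesis using hi z \<open>p < q\<close> by (simp add: abs_mult mult.commute mult_right_mono)
  qed
  show ?thesis
    using *[OF xS yS] *[OF yS xS] by (cases x y rule: linorder_cases) (auto simp: abs_minus_commute)
qed

lemma is_interval_level_sets_mono:
  fixes f :: "real \<Rightarrow> real"
  assumes S: "is_interval S" and mono: "\<And>x y. x \<in> S \<Longrightarrow> y \<in> S \<Longrightarrow> x \<le> y \<Longrightarrow> f x \<le> f y"
  shows "is_interval {x\<in>S. c \<le> f x}" and "is_interval {x\<in>S. f x \<le> c}"
proof -
  have xS: "x \<in> S" if "a \<in> S" "b \<in> S" "a \<le> x" "x \<le> b" for a b x
    using S that unfolding is_interval_1 by blast
  show "is_interval {x\<in>S. c \<le> f x}"
    unfolding is_interval_1 using xS mono by (smt (verit) mem_Collect_eq)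
  show "is_interval {x\<in>S. f x \<le> c}"
    unfolding is_interval_1 using xS mono by (smt (verit) mem_Collect_eq)
qed

definition cells :: "real \<Rightarrow> real set \<Rightarrow> int set" where
  "cells l T = {i. \<exists>x\<in>T. of_int i * l \<le> x \<and> x < (of_int i + 1) * l}"

lemma cells_mono: "T \<subseteq> T' \<Longrightarrow> cells l T \<subseteq> cells l T'"
  unfolding cells_def by blast

lemma cells_Un: "cells l (T \<union> T') = cells l T \<union> cells l T'"
  unfolding cells_def by blast

lemma cells_index_dist_le:
  assumes "l > 0" "i \<in> cells l T" "j \<in> cells l T" "\<And>x y. x \<in> T \<Longrightarrow> y \<in> T \<Longrightarrow> \<bar>x - y\<bar> < 2 * l"
  shows "\<bar>i - j\<bar> \<le> 2"
proof -
  obtain x y where "x \<in> T" "of_int i * l \<le> x" "x < (of_int i + 1) * l"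
    and "y \<in> T" "of_int j * l \<le> y" "y < (of_int j + 1) * l"
    using assms(2,3) unfolding cells_def by blast
  with assms(4) have "(of_int i - of_int j - 1) * l < 2 * l" "(of_int j - of_int i - 1) * l < 2 * l"
    by (fastforce simp: algebra_simps abs_less_iff)+
  hence "of_int i - of_int j - 1 < (2::real)" "of_int j - of_int i - 1 < (2::real)"
    using \<open>l > 0\<close> by simp_all
  thus ?thesis by linarith
qed

lemma card_int_set_le_3:
  fixes A :: "int set"
  assumes "\<And>i j. i \<in> A \<Longrightarrow> j \<in> A \<Longrightarrow> \<bar>i - j\<bar> \<le> 2"
  shows "finite A \<and> card A \<le> 3"
proof (cases "A = {}")
  case False
  then obtain i0 where i0: "i0 \<in> A" by blast
  have fin: "finite A"
    by (rule finite_subset[of _ "{i0-2..i0+2}"]) (use assms i0 in \<open>force+\<close>)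
  define m where "m = Min A"
  have "m \<in> A" using fin False by (simp add: m_def)
  hence "A \<subseteq> {m..m+2}" using assms fin by (force simp: m_def)
  hence "card A \<le> card {m..m+2}" by (rule card_mono[rotated]) simp
  thus ?thesis using fin by simp
qed simp

text \<open>The \<open>(k - 1)\<close>-st derivative is smaller than \<open>\<delta> l\<close> only on a set of length \<open>< 2 l\<close>, which
  meets at most three cells; on either side of that set induction applies.\<close>
lemma card_cells_small:
  fixes f :: "nat \<Rightarrow> real \<Rightarrow> real"
  assumes d: "\<And>i x. (f i has_real_derivative f (Suc i) x) (at x)"
    and S: "is_interval S" and \<delta>: "\<delta> > 0" and l: "l > 0"
    and lo: "\<And>x. x \<in> S \<Longrightarrow> \<delta> \<le> f k x"
  shows "finite (cells l {x\<in>S. \<bar>f 0 x\<bar> < \<delta> * l ^ k})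
    \<and> card (cells l {x\<in>S. \<bar>f 0 x\<bar> < \<delta> * l ^ k}) \<le> 3 * (2 ^ k - 1)"
  using d S \<delta> lo
proof (induction k arbitrary: f S \<delta>)
  case 0
  hence "{x\<in>S. \<bar>f 0 x\<bar> < \<delta> * l ^ 0} = {}" by force
  thus ?case by (simp only:) (simp add: cells_def)
next
  case (Suc k)
  note d = Suc.prems(1)
  have \<delta>l: "\<delta> * l > 0" using Suc.prems(3) l by simp
  have incr: "\<delta> * (y - x) \<le> f k y - f k x" if "x \<in> S" "y \<in> S" "x \<le> y" for x y
    by (rule DERIV_diff_ge[OF d Suc.prems(2) that]) (use Suc.prems(4) in auto)
  have mono: "f k x \<le> f k y" if "x \<in> S" "y \<in> S" "x \<le> y" for x y
    using incr[OF that] Suc.prems(3) that(3) by (smt (verit) mult_nonneg_nonneg)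
  define T where "T = {x\<in>S. \<bar>f k x\<bar> < \<delta> * l}"
  define Sp where "Sp = {x\<in>S. \<delta> * l \<le> f k x}"
  define Sm where "Sm = {x\<in>S. f k x \<le> - (\<delta> * l)}"
  have ivp: "is_interval Sp" unfolding Sp_def by (rule is_interval_level_sets_mono(1)[OF Suc.prems(2) mono])
  have ivm: "is_interval Sm" unfolding Sm_def by (rule is_interval_level_sets_mono(2)[OF Suc.prems(2) mono])
  have dneg: "((\<lambda>x. - f i x) has_real_derivative - f (Suc i) x) (at x)" for i x
    using d by (rule DERIV_minus)
  let ?small = "\<lambda>S g. cells l {x\<in>S. \<bar>g x\<bar> < \<delta> * l * l ^ k}"
  have "finite (?small Sp (f 0)) \<and> card (?small Sp (f 0)) \<le> 3 * (2 ^ k - 1)"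
    by (rule Suc.IH[of f Sp, OF d ivp \<delta>l]) (simp add: Sp_def)
  moreover have "finite (?small Sm (\<lambda>x. - f 0 x)) \<and> card (?small Sm (\<lambda>x. - f 0 x)) \<le> 3 * (2 ^ k - 1)"
    by (rule Suc.IH[of "\<lambda>i x. - f i x" Sm, OF dneg ivm \<delta>l]) (simp add: Sm_def)
  moreover have "finite (cells l T) \<and> card (cells l T) \<le> 3"
  proof (intro card_int_set_le_3 cells_index_dist_le[OF l])
    fix x y assume "x \<in> T" "y \<in> T"
    hence "\<delta> * \<bar>x - y\<bar> < \<delta> * (2 * l)"
      using incr[of x y] incr[of y x] unfolding T_def by (cases "x \<le> y") (auto simp: abs_less_iff)
    thus "\<bar>x - y\<bar> < 2 * l" using Suc.prems(3) by simp
  qed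
  moreover have "cells l {x\<in>S. \<bar>f 0 x\<bar> < \<delta> * l ^ Suc k}
      \<subseteq> cells l T \<union> ?small Sp (f 0) \<union> ?small Sm (\<lambda>x. - f 0 x)"
    unfolding cells_Un[symmetric]
    by (rule cells_mono) (auto simp: T_def Sp_def Sm_def mult.assoc)
  ultimately have "finite (cells l {x\<in>S. \<bar>f 0 x\<bar> < \<delta> * l ^ Suc k})
    \<and> card (cells l {x\<in>S. \<bar>f 0 x\<bar> < \<delta> * l ^ Suc k}) \<le> 3 + 3 * (2 ^ k - 1) + 3 * (2 ^ k - 1)"
    by (meson card_Un_le card_mono finite_UnI order_trans add_mono finite_subset)
  moreover have "3 + 3 * (2 ^ k - 1) + 3 * (2 ^ k - 1) = 3 * (2 ^ Suc k - 1 :: nat)"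
    using one_le_power[of "2::nat" k] by (simp add: algebra_simps)
  ultimately show ?case by simp
qed

lemma exists_cell_bounded_away:
  fixes f :: "nat \<Rightarrow> real \<Rightarrow> real"
  assumes d: "\<And>i x. (f i has_real_derivative f (Suc i) x) (at x)"
    and l: "l > 0" and \<delta>: "\<delta> > 0" and w: "3 * 2 ^ j * l \<le> w"
    and lo: "\<And>x. x \<in> {a..a+w} \<Longrightarrow> \<delta> \<le> f j x"
  shows "\<exists>i::int. a \<le> of_int i * l \<and> (of_int i + 1) * l \<le> a + w \<and>
           (\<forall>x. of_int i * l \<le> x \<and> x < (of_int i + 1) * l \<longrightarrow> \<delta> * l ^ j \<le> \<bar>f 0 x\<bar>)"
proof -
  define B where "B = 3 * (2 ^ j - 1 :: nat)"
  let ?bad = "cells l {x\<in>{a..a+w}. \<bar>f 0 x\<bar> < \<delta> * l ^ j}"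
  have bad: "finite ?bad" "card ?bad \<le> B"
    using card_cells_small[OF d is_interval_cc \<delta> l lo] by (auto simp: B_def)
  define c where "c = \<lceil>a / l\<rceil>"
  have B: "int B = 3 * 2 ^ j - 3" by (simp add: B_def of_nat_diff)
  define I where "I = {c .. c + int B}"
  have inside: "a \<le> of_int i * l \<and> (of_int i + 1) * l \<le> a + w" if "i \<in> I" for i
  proof
    have "c \<le> i" using that by (simp add: I_def)
    hence "a / l \<le> of_int i" using le_of_int_ceiling[of "a / l"] unfolding c_def by linarith
    thus "a \<le> of_int i * l" using l by (simp add: field_simps)
    have "i \<le> c + 3 * 2 ^ j - 3" using that B by (simp add: I_def)
    hence "of_int i \<le> (of_int (c + 3 * 2 ^ j - 3) :: real)" by (simp only: of_int_le_iff)
    hence "of_int i + 1 < a / l + 3 * 2 ^ j"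
      using ceiling_correct[of "a / l"] unfolding c_def by simp
    hence "(of_int i + 1) * l < a + 3 * 2 ^ j * l" using l by (simp add: field_simps)
    thus "(of_int i + 1) * l \<le> a + w" using w by linarith
  qed
  have "\<not> I \<subseteq> ?bad"
  proof
    assume "I \<subseteq> ?bad"
    hence "card I \<le> card ?bad" using bad by (intro card_mono) auto
    thus False using bad by (simp add: I_def)
  qed
  then obtain i where i: "i \<in> I" "i \<notin> ?bad" by blast
  have "\<delta> * l ^ j \<le> \<bar>f 0 x\<bar>" if "of_int i * l \<le> x" "x < (of_int i + 1) * l" for x
  proof -
    have "x \<in> {a..a+w}" using inside[OF i(1)] that by auto
    with i(2) that have "\<not> \<bar>f 0 x\<bar> < \<delta> * l ^ j" unfolding cells_def by blast
    thus ?thesis by simp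
  qed
  thus ?thesis using inside[OF i(1)] by blast
qed

lemma exists_index_growth_stops:
  fixes V :: "nat \<Rightarrow> real"
  assumes V: "\<And>i. 0 \<le> V i" and q: "1 \<le> q" and kK: "k \<le> K" and small: "V (Suc K) < q * V k"
  shows "\<exists>j\<le>K. V (Suc j) \<le> q * V j \<and> V 0 \<le> V j"
proof -
  have ex: "\<exists>j. j \<le> K \<and> V (Suc j) \<le> q * V j"
  proof (rule ccontr)
    assume "\<not> ?thesis"
    hence grow: "j \<le> K \<Longrightarrow> q * V j < V (Suc j)" for j by force
    have "q ^ i * V k \<le> V (k + i)" if "k + i \<le> Suc K" for i
      using that
    proof (induction i)
      case (Suc i)
      hence "q * (q ^ i * V k) \<le> q * V (k + i)" using q by (intro mult_left_mono) auto
      thus ?case using grow[of "k + i"] Suc.prems by (simp add: mult.assoc)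
    qed simp
    from this[of "Suc K - k"] have "q ^ (Suc K - k) * V k \<le> V (Suc K)" using kK by simp
    moreover have "q \<le> q ^ (Suc K - k)"
      using q kK by (metis Suc_diff_le le_add1 plus_1_eq_Suc power_increasing power_one_right)
    ultimately show False using small V[of k] by (smt (verit) mult_right_mono)
  qed
  define j where "j = (LEAST j. j \<le> K \<and> V (Suc j) \<le> q * V j)"
  have j: "j \<le> K" "V (Suc j) \<le> q * V j"
    using LeastI_ex[OF ex] unfolding j_def by auto
  have first: "q * V i < V (Suc i)" if "i < j" for i
    using not_less_Least[OF that[unfolded j_def]] that j(1) by auto
  have "V 0 \<le> V i" if "i \<le> j" for i
    using that
  proof (induction i)
    case (Suc i)
    thus ?case using first[of i] mult_right_mono[OF q V[of i]] by simp
  qed simp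
  thus ?thesis using j by blast
qed

text \<open>Applied to the sup-norms \<open>V i\<close> of the derivatives on the interval with \<open>q = C / L\<close>: at the
  index \<open>j\<close> where the growth stops, \<open>V j \<ge> V 0\<close>, and by the mean value theorem \<open>f j\<close> keeps half
  its maximal modulus on a subinterval of length \<open>L / (2 C)\<close>.\<close>
lemma exists_derivative_dominating:
  fixes f :: "nat \<Rightarrow> real \<Rightarrow> real"
  assumes d: "\<And>i x. (f i has_real_derivative f (Suc i) x) (at x)"
    and L: "0 < L" "L \<le> 1" and C: "1 \<le> C" and kK: "k \<le> K" and \<delta>: "\<delta> > 0"
    and lo: "\<And>z. z \<in> {a..a+L} \<Longrightarrow> \<delta> \<le> \<bar>f k z\<bar>"
    and hi: "\<And>z. z \<in> {a..a+L} \<Longrightarrow> \<bar>f (Suc K) z\<bar> < C * \<delta>"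
  shows "\<exists>j\<le>K. \<exists>p0 w V sg. (sg = 1 \<or> sg = -1) \<and> a \<le> p0 \<and> p0 + w \<le> a + L \<and> L / (2 * C) \<le> w \<and>
           (\<forall>t\<in>{a..a+L}. \<bar>f 0 t\<bar> \<le> V) \<and> (\<forall>t\<in>{p0..p0+w}. V / 2 \<le> sg * f j t)"
proof -
  let ?S = "{a..a+L}"
  have "\<exists>t\<in>?S. \<forall>y\<in>?S. \<bar>f i y\<bar> \<le> \<bar>f i t\<bar>" for i
  proof (rule continuous_attains_sup[OF compact_Icc])
    have "continuous_on ?S (f i)"
      by (rule continuous_at_imp_continuous_on) (use d DERIV_isCont in blast)
    thus "continuous_on ?S (\<lambda>y. \<bar>f i y\<bar>)" by (intro continuous_intros)
  qed (use L in auto)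
  then obtain tm where tm: "\<And>i. tm i \<in> ?S" "\<And>i y. y \<in> ?S \<Longrightarrow> \<bar>f i y\<bar> \<le> \<bar>f i (tm i)\<bar>"
    by metis
  define V where "V i = \<bar>f i (tm i)\<bar>" for i
  have CL: "1 \<le> C / L" "C \<le> C / L" using C L by (auto simp: field_simps mult_left_le)
  have "\<delta> \<le> V k" using lo[OF tm(1)] tm(2)[OF tm(1)] by (force simp: V_def)
  hence "C * \<delta> \<le> (C / L) * V k" using CL \<delta> by (smt (verit) mult_mono)
  hence "V (Suc K) < (C / L) * V k" using hi[OF tm(1)[of "Suc K"]] by (simp add: V_def)
  then obtain j where j: "j \<le> K" "V (Suc j) \<le> (C / L) * V j" "V 0 \<le> V j"
    using exists_index_growth_stops[of V "C / L" k K] CL(1) kK by (auto simp: V_def)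
  hence bound0: "\<forall>t\<in>?S. \<bar>f 0 t\<bar> \<le> V j"
    using tm(2)[of _ 0] unfolding V_def by (meson order.trans)
  define t0 where "t0 = tm j"
  define sg :: real where "sg = (if f j t0 \<ge> 0 then 1 else -1)"
  define h where "h = L / (2 * C)"
  have near: "V j / 2 \<le> sg * f j t" if "t \<in> ?S" "\<bar>t - t0\<bar> \<le> h" for t
  proof -
    have "\<bar>f j t - f j t0\<bar> \<le> V (Suc j) * \<bar>t - t0\<bar>"
      by (rule DERIV_abs_diff_le[OF d is_interval_cc]) (use tm that in \<open>auto simp: t0_def V_def\<close>)
    also have "\<dots> \<le> (C / L) * V j * h"
      using j(2) that(2) by (intro mult_mono) (auto simp: V_def)
    also have "\<dots> = V j / 2" using C L by (simp add: h_def field_simps)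
    finally have "\<bar>f j t - f j t0\<bar> \<le> V j / 2" .
    moreover have "sg * f j t0 = V j" by (simp add: sg_def V_def t0_def)
    ultimately show ?thesis by (auto simp: sg_def split: if_splits; linarith)
  qed
  define p0 where "p0 = max a (t0 - h)"
  define w where "w = min (a + L) (t0 + h) - p0"
  have "t0 \<in> ?S" "0 < h" "h \<le> L / 2" using tm(1) L C by (auto simp: t0_def h_def field_simps)
  hence "a \<le> p0" "p0 + w \<le> a + L" "h \<le> w" by (auto simp: p0_def w_def)
  moreover have "\<forall>t\<in>{p0..p0+w}. V j / 2 \<le> sg * f j t"
    using near by (auto simp: p0_def w_def abs_le_iff)
  moreover have "sg = 1 \<or> sg = -1" by (simp add: sg_def)
  ultimately show ?thesis using j(1) bound0 unfolding h_def by blast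
qed

lemma sum_cell_infima_ge:
  fixes g :: "real \<Rightarrow> real" and N :: nat and i :: int
  assumes N: "N > 0" and i: "0 \<le> i" "of_int i + 1 \<le> real N"
    and lo: "\<And>x. of_int i / real N \<le> x \<Longrightarrow> x < (of_int i + 1) / real N \<Longrightarrow> c \<le> \<bar>g x\<bar>"
  shows "c \<le> (\<Sum>m<N. INF x\<in>{real m / real N ..< real (m + 1) / real N}. \<bar>g x\<bar>)"
proof -
  have ne: "{real m / real N ..< real (m + 1) / real N} \<noteq> {}" for m
    using N by (simp add: divide_strict_right_mono)
  have nonneg: "0 \<le> (INF x\<in>{real m / real N ..< real (m + 1) / real N}. \<bar>g x\<bar>)" for m
    by (rule cINF_greatest[OF ne]) simp
  have "c \<le> (INF x\<in>{real (nat i) / real N ..< real (nat i + 1) / real N}. \<bar>g x\<bar>)"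
    by (rule cINF_greatest[OF ne]) (use lo i in \<open>auto simp: add.commute\<close>)
  also have "\<dots> \<le> (\<Sum>m<N. INF x\<in>{real m / real N ..< real (m + 1) / real N}. \<bar>g x\<bar>)"
    by (rule member_le_sum[where f="\<lambda>m. INF x\<in>{real m / real N ..< real (m + 1) / real N}. \<bar>g x\<bar>"])
       (use i nonneg in auto)
  finally show ?thesis .
qed

section \<open>Cauchy estimates for periodic analytic functions\<close>

lemma diffs_funpow: "(diffs ^^ j) c n = fact (n + j) / fact n * (c (n + j) :: real)"
proof (induction j arbitrary: n)
  case (Suc j)
  have "(diffs ^^ Suc j) c n = of_nat (Suc n) * (fact (Suc n + j) / fact (Suc n) * c (Suc n + j))"
    by (simp add: diffs_def Suc)
  also have "\<dots> = fact (n + Suc j) / fact n * c (n + Suc j)"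
    by (simp del: of_nat_Suc fact_Suc add: fact_Suc[of n])
  finally show ?case .
qed simp

lemma fact_add_div_fact_le: "fact (n + j) / fact n \<le> (fact j * 2 ^ (n + j) :: real)"
proof -
  have "fact (n + j) = (fact j * fact n * ((n + j) choose j) :: real)"
    using binomial_fact_lemma[of j "n + j"] by (metis add_diff_cancel_right' le_add2 of_nat_fact of_nat_mult)
  moreover have "real ((n + j) choose j) \<le> 2 ^ (n + j)"
    using binomial_le_pow2[of "n + j" j] by (metis of_nat_le_iff of_nat_numeral of_nat_power)
  ultimately show ?thesis by (simp add: field_simps mult_left_mono)
qed

lemma power_series_higher_deriv:
  fixes \<phi> :: "real \<Rightarrow> real"
  assumes r: "r > 0" and ps: "\<And>y. \<bar>y - x0\<bar> < r \<Longrightarrow> (\<lambda>n. c n * (y - x0) ^ n) sums \<phi> y"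
    and y: "\<bar>y - x0\<bar> < r"
  shows "(\<lambda>n. (diffs ^^ j) c n * (y - x0) ^ n) sums (deriv ^^ j) \<phi> y"
    and "((deriv ^^ j) \<phi> has_real_derivative (deriv ^^ Suc j) \<phi> y) (at y)"
proof -
  have summ: "summable (\<lambda>n. (diffs ^^ j) c n * z ^ n)" if "\<bar>z\<bar> < r" for j z
    using that
  proof (induction j arbitrary: z)
    case 0
    show ?case using ps[of "z + x0"] 0 by (simp add: sums_iff)
  next
    case (Suc j)
    thus ?case using termdiff_converges[of z r "(diffs ^^ j) c"] by simp
  qed
  define P where "P j z = (\<Sum>n. (diffs ^^ j) c n * z ^ n)" for j z
  have dP: "((\<lambda>y. P j (y - x0)) has_real_derivative P (Suc j) (y - x0)) (at y)"
    if "\<bar>y - x0\<bar> < r" for j y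
  proof -
    have "(P j has_real_derivative P (Suc j) (y - x0)) (at (y - x0))"
      unfolding P_def[abs_def] using termdiffs_strong'[of r "(diffs ^^ j) c" "y - x0"] summ that by simp
    thus ?thesis using DERIV_shift[of "P j" _ y "- x0"] by simp
  qed
  have transfer: "((deriv ^^ j) \<phi> has_real_derivative P (Suc j) (y - x0)) (at y)"
    if eq: "\<forall>y. \<bar>y - x0\<bar> < r \<longrightarrow> (deriv ^^ j) \<phi> y = P j (y - x0)" and y: "\<bar>y - x0\<bar> < r" for j y
  proof (rule has_field_derivative_transform_within_open[OF dP[OF y], of "ball x0 r"])
    show "y \<in> ball x0 r" using y by (simp add: dist_real_def abs_minus_commute)
  qed (use eq in \<open>auto simp: dist_real_def abs_minus_commute\<close>)
  have eq: "\<forall>y. \<bar>y - x0\<bar> < r \<longrightarrow> (deriv ^^ j) \<phi> y = P j (y - x0)" for j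
  proof (induction j)
    case 0
    show ?case using ps by (auto simp: P_def sums_iff)
  next
    case (Suc j)
    thus ?case using transfer DERIV_imp_deriv by fastforce
  qed
  show "(\<lambda>n. (diffs ^^ j) c n * (y - x0) ^ n) sums (deriv ^^ j) \<phi> y"
    using eq[of j] y summ[of "y - x0" j] by (simp add: P_def summable_sums)
  show "((deriv ^^ j) \<phi> has_real_derivative (deriv ^^ Suc j) \<phi> y) (at y)"
    using transfer[OF eq y] eq[of "Suc j"] y by simp
qed

lemma sums_abs_le:
  fixes f g :: "nat \<Rightarrow> real"
  assumes "f sums S" "g sums G" "\<And>n. \<bar>f n\<bar> \<le> g n"
  shows "\<bar>S\<bar> \<le> G"
proof -
  have "S \<le> G" by (rule sums_le[OF _ assms(1,2)]) (use assms(3) abs_le_D1 in blast)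
  moreover have "-G \<le> S"
    by (rule sums_le[OF _ sums_minus[OF assms(2)] assms(1)]) (use assms(3) in \<open>metis abs_le_D2 minus_le_iff\<close>)
  ultimately show ?thesis by linarith
qed

text \<open>With \<open>\<bar>c n\<bar> \<le> B / \<rho>^n\<close> for \<open>\<rho> = r / 2\<close>, on the ball of radius \<open>\<rho> / 4\<close> the \<open>n\<close>-th term
  of the \<open>j\<close>-th derived series is at most \<open>B j! (2 / \<rho>)^j 2^(-n)\<close>.\<close>
lemma power_series_Cauchy_estimates:
  fixes \<phi> :: "real \<Rightarrow> real"
  assumes r: "r > 0" and ps: "\<And>y. \<bar>y - x0\<bar> < r \<Longrightarrow> (\<lambda>n. c n * (y - x0) ^ n) sums \<phi> y"
  shows "\<exists>s>0. \<exists>M>0. \<forall>j y. \<bar>y - x0\<bar> < s \<longrightarrow> \<bar>(deriv ^^ j) \<phi> y\<bar> \<le> M * fact j / s ^ j"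
proof -
  define \<rho> where "\<rho> = r / 2"
  have \<rho>: "\<rho> > 0" using r by (simp add: \<rho>_def)
  have "summable (\<lambda>n. c n * \<rho> ^ n)" using ps[of "x0 + \<rho>"] r by (simp add: \<rho>_def sums_iff)
  hence "Bseq (\<lambda>n. c n * \<rho> ^ n)" by (intro convergent_imp_Bseq convergentI[OF summable_LIMSEQ_zero])
  then obtain B where B: "B > 0" "\<And>n. \<bar>c n * \<rho> ^ n\<bar> \<le> B" unfolding Bseq_def by auto
  have cB: "\<bar>c n\<bar> \<le> B / \<rho> ^ n" for n
    using B(2)[of n] \<rho> by (simp add: abs_mult field_simps)
  have bound: "\<bar>(deriv ^^ j) \<phi> y\<bar> \<le> 2 * B * fact j / (r / 4) ^ j" if y: "\<bar>y - x0\<bar> < r / 8" for j y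
  proof (rule sums_abs_le)
    show "(\<lambda>n. (diffs ^^ j) c n * (y - x0) ^ n) sums (deriv ^^ j) \<phi> y"
      using power_series_higher_deriv(1)[OF r ps, of y j] y r by simp
    define g where "g n = B * fact j * (2 / \<rho>) ^ j * (1 / 2) ^ n" for n
    have "g sums (B * fact j * (2 / \<rho>) ^ j * 2)"
      unfolding g_def using sums_mult[OF geometric_sums[of "1/2::real"]] by simp
    thus "g sums (2 * B * fact j / (r / 4) ^ j)"
      by (simp add: \<rho>_def field_simps power_divide)
    fix n
    have "\<bar>(diffs ^^ j) c n * (y - x0) ^ n\<bar> = fact (n + j) / fact n * \<bar>c (n + j)\<bar> * \<bar>y - x0\<bar> ^ n"
      by (simp add: diffs_funpow abs_mult power_abs)
    also have "\<dots> \<le> (fact j * 2 ^ (n + j)) * (B / \<rho> ^ (n + j)) * (\<rho> / 4) ^ n"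
      using y B \<rho> by (intro mult_mono fact_add_div_fact_le cB power_mono) (auto simp: \<rho>_def)
    also have "\<dots> = g n"
    proof -
      have "(4::real) ^ n = 2 ^ n * 2 ^ n" by (simp flip: power_mult_distrib)
      thus ?thesis using \<rho> by (simp add: g_def field_simps power_add power_divide)
    qed
    finally show "\<bar>(diffs ^^ j) c n * (y - x0) ^ n\<bar> \<le> g n" .
  qed
  have "\<bar>(deriv ^^ j) \<phi> y\<bar> \<le> 2 * B * fact j / (r / 8) ^ j" if "\<bar>y - x0\<bar> < r / 8" for j y
  proof -
    have "2 * B * fact j / (r / 4) ^ j \<le> 2 * B * fact j / (r / 8) ^ j"
      using r B by (intro divide_left_mono power_mono mult_pos_pos) auto
    thus ?thesis using bound[OF that, of j] by linarith
  qed
  moreover have "r / 8 > 0" "2 * B > 0" using r B by auto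
  ultimately show ?thesis by blast
qed

lemma higher_deriv_periodic:
  assumes per: "\<And>x. \<phi> (x + 1) = \<phi> x"
    and d: "\<And>j x. ((deriv ^^ j) \<phi> has_real_derivative (deriv ^^ Suc j) \<phi> x) (at x)"
  shows "(deriv ^^ j) \<phi> (x + 1) = (deriv ^^ j) \<phi> x"
proof (induction j arbitrary: x)
  case (Suc j)
  have "((\<lambda>y. (deriv ^^ j) \<phi> (y + 1)) has_real_derivative (deriv ^^ Suc j) \<phi> (x + 1)) (at x)"
    using d[of j "x + 1"] by (simp add: DERIV_shift)
  moreover have "(\<lambda>y. (deriv ^^ j) \<phi> (y + 1)) = (deriv ^^ j) \<phi>" using Suc by auto
  ultimately show ?case using d[of j x] DERIV_unique by auto
qed (use per in simp)

text \<open>The local estimates on finitely many balls covering \<open>[0, 1]\<close>, transported by periodicity.\<close>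
lemma analytic_periodic_Cauchy_estimates:
  fixes \<phi> :: "real \<Rightarrow> real"
  assumes an: "real_analytic_on UNIV \<phi>" and per: "\<And>x. \<phi> (x + 1) = \<phi> x"
  obtains M R where "M > 0" "R > 0" "\<And>j x. \<bar>(deriv ^^ j) \<phi> x\<bar> \<le> M * fact j / R ^ j"
    and "\<And>j x. ((deriv ^^ j) \<phi> has_real_derivative (deriv ^^ Suc j) \<phi> x) (at x)"
proof -
  have loc: "\<exists>r>0. \<exists>c. \<forall>y. \<bar>y - x0\<bar> < r \<longrightarrow> (\<lambda>n. c n * (y - x0) ^ n) sums \<phi> y" for x0
    using an unfolding real_analytic_on_def by blast
  have d: "((deriv ^^ j) \<phi> has_real_derivative (deriv ^^ Suc j) \<phi> x) (at x)" for j x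
    using loc[of x] power_series_higher_deriv(2)[of _ x] by force
  have "\<exists>s>0. \<exists>M>0. \<forall>j y. \<bar>y - x0\<bar> < s \<longrightarrow> \<bar>(deriv ^^ j) \<phi> y\<bar> \<le> M * fact j / s ^ j" for x0
    using loc[of x0] power_series_Cauchy_estimates by blast
  then obtain s MM where s: "\<And>x0. s x0 > 0" "\<And>x0. MM x0 > 0"
    "\<And>x0 j y. \<bar>y - x0\<bar> < s x0 \<Longrightarrow> \<bar>(deriv ^^ j) \<phi> y\<bar> \<le> MM x0 * fact j / s x0 ^ j"
    by metis
  have cover: "{0..1::real} \<subseteq> (\<Union>x0\<in>{0..1}. ball x0 (s x0))"
    using s(1) by force
  obtain F where F: "F \<subseteq> {0..1}" "finite F" "{0..1::real} \<subseteq> (\<Union>x0\<in>F. ball x0 (s x0))"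
    using compactE_image[OF compact_Icc _ cover] by blast
  hence "F \<noteq> {}" by auto
  define R where "R = Min (s ` F)"
  define M where "M = Max (MM ` F)"
  have R: "R > 0" using F \<open>F \<noteq> {}\<close> s(1) by (simp add: R_def)
  have M: "M > 0" using F \<open>F \<noteq> {}\<close> s(2) by (auto simp: M_def Max_gr_iff)
  have on01: "\<bar>(deriv ^^ j) \<phi> y\<bar> \<le> M * fact j / R ^ j" if y: "y \<in> {0..1}" for j y
  proof -
    obtain x0 where x0: "x0 \<in> F" "\<bar>y - x0\<bar> < s x0"
      using F(3) y by (force simp: dist_real_def)
    have "\<bar>(deriv ^^ j) \<phi> y\<bar> \<le> MM x0 * fact j / s x0 ^ j" by (rule s(3)[OF x0(2)])
    also have "\<dots> \<le> M * fact j / R ^ j"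
      using F x0 R M s by (intro frac_le mult_right_mono power_mono) (auto simp: M_def R_def)
    finally show ?thesis .
  qed
  have "\<bar>(deriv ^^ j) \<phi> x\<bar> \<le> M * fact j / R ^ j" for j x
  proof -
    interpret periodic_fun_simple' "(deriv ^^ j) \<phi>"
      by standard (rule higher_deriv_periodic[OF per d])
    have "(deriv ^^ j) \<phi> x = (deriv ^^ j) \<phi> (frac x)" by (simp add: frac_def minus_of_int)
    thus ?thesis using on01[of "frac x" j] frac_lt_1[of x] by simp
  qed
  from that[OF M R this d] show thesis .
qed

section \<open>An identity theorem\<close>

lemma eq_0_if_abs_le_geometric:
  fixes a M :: real
  assumes M: "M > 0" and h: "\<And>N. N > 0 \<Longrightarrow> \<bar>a\<bar> \<le> M / 2 ^ N"
  shows "a = 0"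
proof (rule ccontr)
  assume "a \<noteq> 0"
  hence "\<bar>a\<bar> / M > 0" using M by simp
  then obtain N where "(1/2::real) ^ N < \<bar>a\<bar> / M" using real_arch_pow_inv[of _ "1/2"] by auto
  moreover have "(1/2::real) ^ Suc N \<le> (1/2) ^ N" by (simp add: power_le_one)
  ultimately have "M / 2 ^ Suc N < \<bar>a\<bar>" using M by (simp add: field_simps power_divide)
  thus False using h[of "Suc N"] by simp
qed

text \<open>On the ball of radius \<open>R / 4\<close> the Taylor remainder of order \<open>N\<close> is at most
  \<open>M (N + 1) / 4^N \<le> M / 2^N\<close>.\<close>
lemma derivatives_vanish_near:
  fixes f :: "nat \<Rightarrow> real \<Rightarrow> real"
  assumes d: "\<And>i x. (f i has_real_derivative f (Suc i) x) (at x)"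
    and M: "M > 0" and R: "R > 0"
    and bnd: "\<And>n x. \<bar>f n x\<bar> \<le> M * fact (Suc n) / R ^ n"
    and z: "\<And>n. f n x0 = 0"
    and y: "\<bar>y - x0\<bar> < R / 4"
  shows "f 0 y = 0"
proof (cases "y = x0")
  case False
  show ?thesis
  proof (rule eq_0_if_abs_le_geometric[OF M])
    fix N :: nat assume N: "N > 0"
    obtain t where "f 0 y = (\<Sum>m<N. (f m x0 / fact m) * (y - x0) ^ m) + (f N t / fact N) * (y - x0) ^ N"
      using Taylor[of N f "f 0" "min y x0" "max y x0" x0 y] N d False by auto
    hence "\<bar>f 0 y\<bar> = \<bar>f N t\<bar> / fact N * \<bar>y - x0\<bar> ^ N" using z by (simp add: abs_mult power_abs)
    also have "\<dots> \<le> (M * fact (Suc N) / R ^ N) / fact N * (R / 4) ^ N"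
      using y bnd[of N t] R M by (intro mult_mono divide_right_mono power_mono) auto
    also have "\<dots> = M * real (Suc N) / 4 ^ N"
      using R by (simp add: field_simps power_divide del: of_nat_Suc)
    also have "\<dots> \<le> M * 2 ^ N / 4 ^ N"
    proof -
      have "real (Suc N) \<le> 2 ^ N"
        using Suc_leI[OF less_exp[of N]] by (metis of_nat_le_iff of_nat_numeral of_nat_power)
      thus ?thesis using M by (intro divide_right_mono mult_left_mono) auto
    qed
    also have "\<dots> = M / 2 ^ N"
    proof -
      have "(4::real) ^ N = 2 ^ N * 2 ^ N" by (simp flip: power_mult_distrib)
      thus ?thesis by simp
    qed
    finally show "\<bar>f 0 y\<bar> \<le> M / 2 ^ N" .
  qed
qed (use z in simp)

lemma derivatives_vanish_ball:
  fixes f :: "nat \<Rightarrow> real \<Rightarrow> real"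
  assumes d: "\<And>i x. (f i has_real_derivative f (Suc i) x) (at x)"
    and M: "M > 0" and R: "R > 0"
    and bnd: "\<And>n x. \<bar>f n x\<bar> \<le> M * fact (Suc n) / R ^ n"
    and z: "\<And>n. f n x0 = 0"
  shows "\<forall>y\<in>ball x0 (R / 4). f n y = 0"
proof (induction n)
  case 0
  show ?case using derivatives_vanish_near[OF d M R bnd z] by (simp add: dist_real_def abs_minus_commute)
next
  case (Suc n)
  show ?case
  proof
    fix y assume y: "y \<in> ball x0 (R / 4)"
    have "((\<lambda>_. 0) has_real_derivative f (Suc n) y) (at y)"
      by (rule has_field_derivative_transform_within_open[OF d[of n y] open_ball y]) (use Suc in auto)
    thus "f (Suc n) y = 0" using DERIV_const DERIV_unique by blast
  qed
qed

text \<open>The radius \<open>R / 4\<close> of the ball on which all derivatives vanish does not depend on the centre,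
  so the ball can be moved in steps of \<open>R / 8\<close>.\<close>
lemma derivatives_vanish_everywhere:
  fixes f :: "nat \<Rightarrow> real \<Rightarrow> real"
  assumes d: "\<And>i x. (f i has_real_derivative f (Suc i) x) (at x)"
    and M: "M > 0" and R: "R > 0"
    and bnd: "\<And>n x. \<bar>f n x\<bar> \<le> M * fact (Suc n) / R ^ n"
    and z: "\<And>n. f n x0 = 0"
  shows "f 0 y = 0"
proof -
  have "\<forall>y n. \<bar>y - x0\<bar> \<le> real N * (R / 8) \<longrightarrow> f n y = 0" for N
  proof (induction N)
    case (Suc N)
    show ?case
    proof (intro allI impI)
      fix y n assume y: "\<bar>y - x0\<bar> \<le> real (Suc N) * (R / 8)"
      define y' where "y' = x0 + (y - x0) * real N / real (Suc N)"
      have "\<bar>y' - x0\<bar> = \<bar>y - x0\<bar> * real N / real (Suc N)" by (simp add: y'_def abs_mult)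
      also have "\<dots> \<le> real (Suc N) * (R / 8) * real N / real (Suc N)"
        using y by (intro divide_right_mono mult_right_mono) auto
      also have "\<dots> = real N * (R / 8)" by (simp del: of_nat_Suc)
      finally have z': "\<And>n. f n y' = 0" using Suc by blast
      have "\<bar>y - y'\<bar> = \<bar>y - x0\<bar> / real (Suc N)"
        by (simp add: y'_def field_simps abs_divide del: of_nat_Suc) (simp add: algebra_simps)
      also have "\<dots> \<le> R / 8" using y by (simp add: field_simps del: of_nat_Suc)
      also have "\<dots> < R / 4" using R by simp
      finally show "f n y = 0"
        using derivatives_vanish_ball[OF d M R bnd z'] by (simp add: dist_real_def abs_minus_commute)
    qed
  qed (use z in simp)
  moreover obtain N where "\<bar>y - x0\<bar> / (R / 8) \<le> real N" using real_arch_simple by blast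
  ultimately show ?thesis using R by (simp add: field_simps)
qed

section \<open>Digit sequences\<close>

definition digit_value :: "nat \<Rightarrow> (nat \<Rightarrow> nat) \<Rightarrow> nat \<Rightarrow> real" where
  "digit_value b u n = (\<Sum>k=1..n. real (u k) * real b ^ (k - 1))"

text \<open>The argument \<open>x / b^(s+1) + u_1 / b^(s+1) + \<dots> + u_(s+1) / b\<close> of the \<open>(s + 1)\<close>-st term of \<open>Y\<close>.\<close>
definition Y_arg :: "nat \<Rightarrow> (nat \<Rightarrow> nat) \<Rightarrow> nat \<Rightarrow> real \<Rightarrow> real" where
  "Y_arg b u s x = (x + digit_value b u (Suc s)) / real b ^ Suc s"

definition shift_seq :: "nat \<Rightarrow> (nat \<Rightarrow> nat) \<Rightarrow> nat \<Rightarrow> nat" where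
  "shift_seq p u = (\<lambda>k. if k = 0 then 0 else u (k + p))"

lemma digit_value_Suc: "digit_value b u (Suc n) = digit_value b u n + real (u (Suc n)) * real b ^ n"
  by (simp add: digit_value_def)

lemma digit_value_add:
  "digit_value b u (p + n) = digit_value b u p + real b ^ p * digit_value b (shift_seq p u) n"
  by (induction n) (simp_all add: digit_value_Suc shift_seq_def power_add algebra_simps digit_value_def)

lemma digit_value_bounds:
  assumes "u \<in> Sigma b"
  shows "0 \<le> digit_value b u p" and "digit_value b u p \<le> real b ^ p - 1"
proof -
  have "digit_value b u p \<le> real b ^ p - 1"
  proof (induction p)
    case (Suc p)
    have "u (Suc p) < b" using assms by (simp add: Sigma_def)
    hence "real (u (Suc p)) \<le> real b - 1" by linarith
    hence "real (u (Suc p)) * real b ^ p \<le> (real b - 1) * real b ^ p" by (intro mult_right_mono) auto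
    thus ?case using Suc by (simp add: digit_value_Suc algebra_simps)
  qed (simp add: digit_value_def)
  thus "digit_value b u p \<le> real b ^ p - 1" .
  show "0 \<le> digit_value b u p" by (simp add: digit_value_def sum_nonneg)
qed

lemma digit_value_cong:
  "(\<And>k. 1 \<le> k \<Longrightarrow> k \<le> n \<Longrightarrow> u k = v k) \<Longrightarrow> digit_value b u n = digit_value b v n"
  unfolding digit_value_def by (intro sum.cong) auto

lemma shift_seq_Sigma: "u \<in> Sigma b \<Longrightarrow> shift_seq p u \<in> Sigma b"
  by (simp add: Sigma_def shift_seq_def)

lemma Y_arg_shift:
  assumes "b > 0"
  shows "Y_arg b u (s + p) x = Y_arg b (shift_seq p u) s ((x + digit_value b u p) / real b ^ p)"
proof -
  have "digit_value b u (Suc (s + p)) = digit_value b u p + real b ^ p * digit_value b (shift_seq p u) (Suc s)"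
    using digit_value_add[of b u p "Suc s"] by (simp add: add.commute)
  thus ?thesis using assms by (simp add: Y_arg_def field_simps power_add)
qed

lemma Y_arg_eq:
  assumes "b > 0"
  shows "Y_arg b u s x = x / real b ^ Suc s + (\<Sum>k=1..Suc s. real (u k) / real b ^ (Suc s + 1 - k))"
proof -
  have "digit_value b u (Suc s) / real b ^ Suc s = (\<Sum>k=1..Suc s. real (u k) / real b ^ (Suc s + 1 - k))"
    unfolding digit_value_def sum_divide_distrib
  proof (rule sum.cong[OF refl])
    fix k assume "k \<in> {1..Suc s}"
    hence "real b ^ Suc s = real b ^ (k - 1) * real b ^ (Suc s + 1 - k)" by (simp flip: power_add)
    thus "real (u k) * real b ^ (k - 1) / real b ^ Suc s = real (u k) / real b ^ (Suc s + 1 - k)"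
      using assms by (simp add: field_simps)
  qed
  thus ?thesis by (simp add: Y_arg_def add_divide_distrib)
qed

lemma first_difference:
  assumes "u \<in> Sigma b" "v \<in> Sigma b" "u n \<noteq> v n"
  obtains p where "p < n" "\<And>k. 1 \<le> k \<Longrightarrow> k \<le> p \<Longrightarrow> u k = v k" "u (Suc p) \<noteq> v (Suc p)"
proof -
  define m where "m = (LEAST m. u m \<noteq> v m)"
  have "u m \<noteq> v m" unfolding m_def by (rule LeastI[of _ n]) (rule assms(3))
  moreover have "m \<le> n" unfolding m_def by (rule Least_le) (rule assms(3))
  moreover have "m \<noteq> 0"
    using \<open>u m \<noteq> v m\<close> assms(1,2) by (metis (mono_tags, lifting) Sigma_def mem_Collect_eq)
  moreover have "u k = v k" if "k < m" for k using not_less_Least[OF that[unfolded m_def]] by simp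
  ultimately show thesis by (intro that[of "m - 1"]) auto
qed

definition first_digit_pairs :: "nat \<Rightarrow> ((nat \<Rightarrow> nat) \<times> (nat \<Rightarrow> nat) \<times> real) set" where
  "first_digit_pairs b = {(u, v, x). u \<in> Sigma b \<and> v \<in> Sigma b \<and> u 1 \<noteq> v 1 \<and> x \<in> {0..1}}"

lemma compact_PiE_finite:
  fixes S :: "nat \<Rightarrow> nat set"
  assumes "\<And>k. finite (S k)"
  shows "compact (PiE UNIV S)"
proof -
  have "compactin (product_topology (\<lambda>i. euclidean) UNIV) (PiE UNIV S)"
    unfolding compactin_PiE using assms finite_imp_compact by auto
  thus ?thesis by (simp add: euclidean_product_topology)
qed

lemma compact_first_digit_pairs: "compact (first_digit_pairs b)"
proof -
  define Sig :: "nat \<Rightarrow> (nat \<Rightarrow> nat) set"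
    where "Sig a = PiE UNIV (\<lambda>k. if k = 0 then {0} else if k = 1 then {a} else {..<b})" for a
  have Sig: "u \<in> Sigma b \<and> u 1 = a \<longleftrightarrow> u \<in> Sig a \<and> a < b" for u a
    unfolding Sigma_def Sig_def PiE_def Pi_def extensional_def by (auto split: if_splits)
  define P where "P = {(a, a'). a < b \<and> a' < b \<and> a \<noteq> a'}"
  have "first_digit_pairs b = (\<Union>(a, a')\<in>P. Sig a \<times> Sig a' \<times> {0..1::real})"
  proof (intro set_eqI iffI)
    fix q assume "q \<in> first_digit_pairs b"
    then obtain u v x where q: "q = (u, v, x)" "u \<in> Sigma b" "v \<in> Sigma b" "u 1 \<noteq> v 1" "x \<in> {0..1}"
      unfolding first_digit_pairs_def by auto
    hence "u \<in> Sig (u 1)" "v \<in> Sig (v 1)" "(u 1, v 1) \<in> P" using Sig by (auto simp: P_def)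
    thus "q \<in> (\<Union>(a, a')\<in>P. Sig a \<times> Sig a' \<times> {0..1::real})" using q by (intro UN_I[of "(u 1, v 1)"]) auto
  next
    fix q assume "q \<in> (\<Union>(a, a')\<in>P. Sig a \<times> Sig a' \<times> {0..1::real})"
    then obtain a a' u v x where "(a, a') \<in> P" "q = (u, v, x)" "u \<in> Sig a" "v \<in> Sig a'" "x \<in> {0..1}"
      by auto
    moreover from this have "u \<in> Sigma b" "u 1 = a" "v \<in> Sigma b" "v 1 = a'"
      using Sig by (auto simp: P_def)
    ultimately show "q \<in> first_digit_pairs b" unfolding first_digit_pairs_def P_def by auto
  qed
  moreover have "finite P"
    unfolding P_def by (rule finite_subset[of _ "{..<b} \<times> {..<b}"]) auto
  moreover have "compact (Sig a)" for a
    unfolding Sig_def by (rule compact_PiE_finite) auto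
  ultimately show ?thesis by (auto intro!: compact_UN compact_Times)
qed

section \<open>Derivatives of \<open>Y\<close>\<close>

locale Y_family =
  fixes b :: nat and lam :: real and \<phi> :: "real \<Rightarrow> real" and M R :: real
  assumes b_ge_2: "b \<ge> 2" and lam_gt: "1 / real b < lam" and lam_lt_1: "lam < 1"
    and M_pos: "M > 0" and R_pos: "R > 0"
    and Cauchy_estimates: "\<And>j x. \<bar>(deriv ^^ j) \<phi> x\<bar> \<le> M * fact j / R ^ j"
    and higher_deriv: "\<And>j x. ((deriv ^^ j) \<phi> has_real_derivative (deriv ^^ Suc j) \<phi> x) (at x)"
begin

definition gam :: real where "gam = 1 / (real b * lam)"

definition Y_term :: "nat \<Rightarrow> (nat \<Rightarrow> nat) \<Rightarrow> real \<Rightarrow> nat \<Rightarrow> real" where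
  "Y_term j u x s = gam ^ Suc s * (1 / real b ^ Suc s) ^ j * (deriv ^^ Suc j) \<phi> (Y_arg b u s x)"

definition Y_deriv :: "nat \<Rightarrow> (nat \<Rightarrow> nat) \<Rightarrow> real \<Rightarrow> real" where
  "Y_deriv j u x = - (\<Sum>s. Y_term j u x s)"

definition Y_gap :: "nat \<Rightarrow> (nat \<Rightarrow> nat) \<Rightarrow> (nat \<Rightarrow> nat) \<Rightarrow> real \<Rightarrow> real" where
  "Y_gap j u v x = Y_deriv j u x - Y_deriv j v x"

definition Cauchy_bound :: "nat \<Rightarrow> real" where
  "Cauchy_bound j = M * fact j / R ^ j"

definition gap_bound :: "nat \<Rightarrow> real" where
  "gap_bound j = 2 * (gam / (1 - gam) * Cauchy_bound (Suc j))"

lemma b_gt_0: "b > 0"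
  using b_ge_2 by simp

lemma b_pos: "real b > 0"
  using b_ge_2 by simp

lemma lam_pos: "lam > 0"
  using lam_gt b_pos by (smt (verit) divide_pos_pos)

lemma gam_pos: "gam > 0"
  using b_pos lam_pos by (simp add: gam_def)

lemma gam_lt_1: "gam < 1"
proof -
  have "1 < real b * lam" using lam_gt b_pos by (simp add: field_simps)
  thus ?thesis by (simp add: gam_def)
qed

lemma inverse_b_lt_gam: "1 / real b < gam"
proof -
  have "real b * lam < real b * 1" using lam_lt_1 b_pos by simp
  thus ?thesis using b_pos lam_pos by (simp add: gam_def field_simps)
qed

lemma inverse_b_power_le_1: "(1 / real b ^ n) ^ j \<le> 1"
  using b_pos b_ge_2 by (simp add: power_le_one)

lemma Cauchy_bound_nonneg: "0 \<le> Cauchy_bound j"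
  using M_pos R_pos by (simp add: Cauchy_bound_def)

lemma gap_bound_nonneg: "0 \<le> gap_bound j"
  using gam_pos gam_lt_1 Cauchy_bound_nonneg by (simp add: gap_bound_def)

lemma Y_term_bound: "\<bar>Y_term j u x s\<bar> \<le> gam ^ Suc s * Cauchy_bound (Suc j)"
proof -
  have "(1 / real b ^ Suc s) ^ j \<le> 1" by (rule inverse_b_power_le_1)
  moreover have "\<bar>(deriv ^^ Suc j) \<phi> (Y_arg b u s x)\<bar> \<le> Cauchy_bound (Suc j)"
    unfolding Cauchy_bound_def by (rule Cauchy_estimates)
  ultimately have "(1 / real b ^ Suc s) ^ j * \<bar>(deriv ^^ Suc j) \<phi> (Y_arg b u s x)\<bar> \<le> 1 * Cauchy_bound (Suc j)"
    by (intro mult_mono) auto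
  hence "gam ^ Suc s * ((1 / real b ^ Suc s) ^ j * \<bar>(deriv ^^ Suc j) \<phi> (Y_arg b u s x)\<bar>)
      \<le> gam ^ Suc s * Cauchy_bound (Suc j)"
    using gam_pos by (intro mult_left_mono) auto
  thus ?thesis using gam_pos by (simp add: Y_term_def abs_mult del: funpow.simps)
qed

lemma gam_power_sums: "(\<lambda>s. gam ^ Suc s * B) sums (gam / (1 - gam) * B)"
  using sums_mult[OF geometric_sums[of gam], of "gam * B"] gam_pos gam_lt_1 by (simp add: field_simps)

lemma Y_term_summable: "summable (Y_term j u x)"
  by (rule summable_comparison_test'[OF sums_summable[OF gam_power_sums]]) (use Y_term_bound in simp)

lemma Y_gap_bound: "\<bar>Y_gap j u v x\<bar> \<le> gap_bound j"
proof -
  have "\<bar>Y_deriv j w x\<bar> \<le> gam / (1 - gam) * Cauchy_bound (Suc j)" for w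
    unfolding Y_deriv_def abs_minus_cancel
    by (rule sums_abs_le[OF summable_sums[OF Y_term_summable] gam_power_sums Y_term_bound])
  from this[of u] this[of v] show ?thesis unfolding Y_gap_def gap_bound_def by linarith
qed

lemma Y_term_deriv: "((\<lambda>x. Y_term j u x s) has_real_derivative Y_term (Suc j) u x s) (at x)"
proof -
  have "((\<lambda>x. Y_arg b u s x) has_real_derivative 1 / real b ^ Suc s) (at x)"
    unfolding Y_arg_def using b_pos by (auto intro!: derivative_eq_intros)
  from DERIV_cmult[OF DERIV_chain2[OF higher_deriv this], of "gam ^ Suc s * (1 / real b ^ Suc s) ^ j"]
  show ?thesis by (simp add: Y_term_def algebra_simps del: funpow.simps)
qed

lemma Y_deriv_deriv: "(Y_deriv j u has_real_derivative Y_deriv (Suc j) u x) (at x)"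
proof -
  have "uniformly_convergent_on UNIV (\<lambda>n x. \<Sum>i<n. Y_term (Suc j) u x i)"
    by (rule Weierstrass_m_test'[OF _ sums_summable[OF gam_power_sums]]) (use Y_term_bound in simp)
  hence "((\<lambda>x. \<Sum>s. Y_term j u x s) has_field_derivative (\<Sum>s. Y_term (Suc j) u x s)) (at x)"
    using has_field_derivative_series'(2)[of UNIV "\<lambda>s x. Y_term j u x s" "\<lambda>s x. Y_term (Suc j) u x s" 0 x,
        OF _ _ _ _ Y_term_summable] Y_term_deriv by simp
  thus ?thesis unfolding Y_deriv_def[abs_def] by (rule DERIV_minus)
qed

lemma Y_gap_deriv: "(Y_gap j u v has_real_derivative Y_gap (Suc j) u v x) (at x)"
  unfolding Y_gap_def[abs_def] by (intro DERIV_diff Y_deriv_deriv)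

lemma Y_deriv_0_eq_Yfun: "Y_deriv 0 u x = Yfun b lam \<phi> x u"
  using Y_arg_eq[of b u] b_pos by (simp add: Y_deriv_def Yfun_def Y_term_def gam_def)

definition scale :: "nat \<Rightarrow> nat \<Rightarrow> real" where
  "scale p k = gam ^ p * (1 / real b ^ p) ^ k"

lemma scale_pos: "scale p k > 0"
  using gam_pos b_pos by (simp add: scale_def)

lemma scale_antimono: "k \<le> k' \<Longrightarrow> scale p k' \<le> scale p k"
  using gam_pos b_pos b_ge_2 unfolding scale_def
  by (intro mult_left_mono power_decreasing) (auto simp: one_le_power)

lemma scale_ge: "(1 / real b) ^ (Suc K * p) \<le> scale p K"
proof -
  have "(1 / real b ^ p) ^ K = (1 / real b) ^ (p * K)" by (simp only: power_one_over power_mult)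
  moreover have "Suc K * p = p + p * K" by simp
  ultimately have "(1 / real b) ^ (Suc K * p) = (1 / real b) ^ p * (1 / real b ^ p) ^ K"
    by (simp only: power_add)
  also have "\<dots> \<le> scale p K"
    unfolding scale_def using inverse_b_lt_gam b_pos
    by (intro mult_right_mono power_mono) auto
  finally show ?thesis .
qed

text \<open>Self-similarity: if \<open>u\<close> and \<open>v\<close> share their first \<open>p\<close> digits, the first \<open>p\<close> terms of
  \<open>Y_gap\<close> cancel and the remaining ones form a rescaled copy of \<open>Y_gap\<close> for the shifted sequences.\<close>
lemma Y_term_shift:
  "Y_term j u x (s + p) = scale p j * Y_term j (shift_seq p u) ((x + digit_value b u p) / real b ^ p) s"
proof -
  have "gam ^ Suc (s + p) = gam ^ p * gam ^ Suc s" by (simp add: power_add)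
  moreover have "1 / real b ^ Suc (s + p) = (1 / real b ^ p) * (1 / real b ^ Suc s)" by (simp add: power_add)
  hence "(1 / real b ^ Suc (s + p)) ^ j = (1 / real b ^ p) ^ j * (1 / real b ^ Suc s) ^ j"
    by (simp only: power_mult_distrib)
  ultimately show ?thesis unfolding Y_term_def scale_def Y_arg_shift[OF b_gt_0] by (simp only: mult_ac)
qed

lemma Y_gap_rescale:
  assumes agree: "\<And>k. 1 \<le> k \<Longrightarrow> k \<le> p \<Longrightarrow> u k = v k"
  shows "Y_gap j u v x =
    scale p j * Y_gap j (shift_seq p u) (shift_seq p v) ((x + digit_value b u p) / real b ^ p)"
proof -
  define f where "f s = Y_term j u x s - Y_term j v x s" for s
  define y where "y = (x + digit_value b u p) / real b ^ p"
  have f_sums: "f sums - Y_gap j u v x"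
    unfolding f_def Y_gap_def Y_deriv_def
    using sums_diff[OF summable_sums summable_sums, OF Y_term_summable Y_term_summable] by simp
  have "f i = 0" if "i < p" for i
  proof -
    have "digit_value b u (Suc i) = digit_value b v (Suc i)" by (rule digit_value_cong) (use agree that in auto)
    thus ?thesis by (simp add: f_def Y_term_def Y_arg_def)
  qed
  hence shifted: "(\<lambda>s. f (s + p)) sums - Y_gap j u v x"
    using sums_split_initial_segment[OF f_sums, of p] by simp
  have "digit_value b v p = digit_value b u p" by (rule digit_value_cong) (use agree in auto)
  hence f_shift: "f (s + p) = scale p j * (Y_term j (shift_seq p u) y s - Y_term j (shift_seq p v) y s)" for s
    unfolding f_def Y_term_shift y_def by (simp add: algebra_simps)
  have "(\<lambda>s. Y_term j (shift_seq p u) y s - Y_term j (shift_seq p v) y s)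
      sums - Y_gap j (shift_seq p u) (shift_seq p v) y"
    unfolding Y_gap_def Y_deriv_def
    using sums_diff[OF summable_sums summable_sums, OF Y_term_summable Y_term_summable] by simp
  hence "(\<lambda>s. f (s + p)) sums (scale p j * - Y_gap j (shift_seq p u) (shift_seq p v) y)"
    unfolding f_shift by (rule sums_mult)
  from sums_unique2[OF shifted this] show ?thesis by (simp add: y_def)
qed

section \<open>Uniform separation of the derivatives\<close>

lemma Y_gap_derivs_not_all_zero:
  assumes H: "condH b lam \<phi>" and u: "u \<in> Sigma b" and v: "v \<in> Sigma b" and uv: "u \<noteq> v"
  shows "\<exists>n. Y_gap n u v x \<noteq> 0"
proof (rule ccontr)
  assume "\<not> ?thesis"
  hence z: "\<And>n. Y_gap n u v x = 0" by blast
  define M' where "M' = 2 * (gam / (1 - gam)) * M / R"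
  have M': "M' > 0" using gam_pos gam_lt_1 M_pos R_pos by (simp add: M'_def)
  have "gap_bound n = M' * fact (Suc n) / R ^ n" for n
    using R_pos by (simp add: gap_bound_def Cauchy_bound_def M'_def field_simps del: fact_Suc)
  hence "\<bar>Y_gap n u v y\<bar> \<le> M' * fact (Suc n) / R ^ n" for n y
    using Y_gap_bound by metis
  hence "Y_gap 0 u v y = 0" for y
    by (rule derivatives_vanish_everywhere[where f="\<lambda>n. Y_gap n u v", OF Y_gap_deriv M' R_pos _ z])
  moreover obtain y where "Yfun b lam \<phi> y v - Yfun b lam \<phi> y u \<noteq> 0"
    using H u v uv unfolding condH_def by blast
  ultimately show False by (simp add: Y_gap_def Y_deriv_0_eq_Yfun)
qed

lemma Y_term_continuous: "continuous_on UNIV (\<lambda>q::(nat \<Rightarrow> nat) \<times> real. Y_term j (fst q) (snd q) s)"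
proof -
  have "continuous_on UNIV (\<lambda>q::(nat \<Rightarrow> nat) \<times> real. fst q k)" for k
    by (rule continuous_on_compose2[OF continuous_on_product_coordinates continuous_on_fst]) auto
  moreover have "continuous_on UNIV (real :: nat \<Rightarrow> real)" by simp
  ultimately have digit: "continuous_on UNIV (\<lambda>q::(nat \<Rightarrow> nat) \<times> real. real (fst q k))" for k
    using continuous_on_compose2[of UNIV "real :: nat \<Rightarrow> real" UNIV "\<lambda>q. fst q k"] by auto
  have arg: "continuous_on UNIV (\<lambda>q::(nat \<Rightarrow> nat) \<times> real. Y_arg b (fst q) s (snd q))"
    unfolding Y_arg_def digit_value_def by (intro continuous_intros digit) (use b_pos in auto)
  have "continuous_on UNIV ((deriv ^^ Suc j) \<phi>)"
    by (rule continuous_at_imp_continuous_on) (use higher_deriv DERIV_isCont in blast)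
  from continuous_on_compose2[OF this arg]
  show ?thesis unfolding Y_term_def by (intro continuous_intros) auto
qed

lemma Y_deriv_continuous: "continuous_on UNIV (\<lambda>q::(nat \<Rightarrow> nat) \<times> real. Y_deriv j (fst q) (snd q))"
proof -
  have "\<forall>\<^sub>F n in sequentially.
      continuous_on UNIV (\<lambda>q::(nat \<Rightarrow> nat) \<times> real. \<Sum>i<n. Y_term j (fst q) (snd q) i)"
    by (simp add: continuous_on_sum Y_term_continuous)
  moreover have "uniform_limit UNIV (\<lambda>n q. \<Sum>i<n. Y_term j (fst q) (snd q) i)
      (\<lambda>q. \<Sum>i. Y_term j (fst q) (snd q) i) sequentially"
    by (rule Weierstrass_m_test[OF _ sums_summable[OF gam_power_sums]]) (use Y_term_bound in auto)
  ultimately have "continuous_on UNIV (\<lambda>q::(nat \<Rightarrow> nat) \<times> real. \<Sum>i. Y_term j (fst q) (snd q) i)"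
    by (rule uniform_limit_theorem) simp
  thus ?thesis unfolding Y_deriv_def by (rule continuous_on_minus)
qed

lemma Y_gap_continuous:
  "continuous_on UNIV (\<lambda>q. Y_gap j (fst q) (fst (snd q)) (snd (snd q)))"
proof -
  have "continuous_on UNIV (\<lambda>q::(nat \<Rightarrow> nat) \<times> (nat \<Rightarrow> nat) \<times> real. Y_deriv j (fst q) (snd (snd q)))"
    by (rule continuous_on_compose2[OF Y_deriv_continuous, of _ "\<lambda>q. (fst q, snd (snd q))", simplified])
       (intro continuous_intros)?
  moreover have "continuous_on UNIV
      (\<lambda>q::(nat \<Rightarrow> nat) \<times> (nat \<Rightarrow> nat) \<times> real. Y_deriv j (fst (snd q)) (snd (snd q)))"
    by (rule continuous_on_compose2[OF Y_deriv_continuous, of _ "\<lambda>q. (fst (snd q), snd (snd q))", simplified])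
       (intro continuous_intros)?
  ultimately show ?thesis unfolding Y_gap_def by (intro continuous_intros)
qed

lemma uniform_derivative_lower_bound:
  assumes H: "condH b lam \<phi>"
  obtains \<delta> K where "\<delta> > 0" "\<And>u v x. (u, v, x) \<in> first_digit_pairs b \<Longrightarrow> \<exists>k\<le>K. \<delta> \<le> \<bar>Y_gap k u v x\<bar>"
proof -
  define G where "G k q = Y_gap k (fst q) (fst (snd q)) (snd (snd q))" for k q
  define Opn where "Opn p = {q. 1 / real (Suc (snd p)) < \<bar>G (fst p) q\<bar>}" for p :: "nat \<times> nat"
  have opn: "open (Opn p)" for p
    unfolding Opn_def G_def
    by (intro open_Collect_less continuous_intros continuous_on_norm Y_gap_continuous)
  have cover: "first_digit_pairs b \<subseteq> (\<Union>p. Opn p)"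
  proof
    fix q assume "q \<in> first_digit_pairs b"
    then obtain u v x where q: "q = (u, v, x)" "u \<in> Sigma b" "v \<in> Sigma b" "u \<noteq> v"
      unfolding first_digit_pairs_def by auto
    obtain n where "Y_gap n u v x \<noteq> 0" using Y_gap_derivs_not_all_zero[OF H q(2-4)] by blast
    hence "\<bar>G n q\<bar> > 0" by (simp add: G_def q)
    then obtain N where "inverse (real (Suc N)) < \<bar>G n q\<bar>" using reals_Archimedean by blast
    hence "q \<in> Opn (n, N)" by (simp add: Opn_def field_simps)
    thus "q \<in> (\<Union>p. Opn p)" by blast
  qed
  obtain C where C: "finite C" "first_digit_pairs b \<subseteq> (\<Union>p\<in>C. Opn p)"
    by (rule compactE_image[OF compact_first_digit_pairs opn cover]) blast
  define K where "K = Max (insert 0 (fst ` C))"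
  define \<delta> where "\<delta> = Min (insert 1 ((\<lambda>p. 1 / real (Suc (snd p))) ` C))"
  show thesis
  proof (rule that)
    show "\<delta> > 0" using C(1) by (simp add: \<delta>_def)
    fix u v x assume "(u, v, x) \<in> first_digit_pairs b"
    then obtain p where p: "p \<in> C" "(u, v, x) \<in> Opn p" using C by blast
    hence "fst p \<le> K" "\<delta> \<le> 1 / real (Suc (snd p))" using C(1) by (simp_all add: K_def \<delta>_def)
    thus "\<exists>k\<le>K. \<delta> \<le> \<bar>Y_gap k u v x\<bar>" using p(2) by (auto simp: Opn_def G_def)
  qed
qed

definition derivative_separated :: "nat \<Rightarrow> real \<Rightarrow> real \<Rightarrow> bool" where
  "derivative_separated K \<delta> \<eta> \<longleftrightarrow> (\<forall>u v x. (u, v, x) \<in> first_digit_pairs b \<longrightarrow>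
     (\<exists>k\<le>K. \<exists>sg::real. (sg = 1 \<or> sg = -1) \<and> (\<forall>z. \<bar>z - x\<bar> \<le> \<eta> \<longrightarrow> \<delta> \<le> sg * Y_gap k u v z)))"

text \<open>\<open>Y_gap k u v\<close> for \<open>k \<le> K\<close> is Lipschitz uniformly in \<open>u\<close>, \<open>v\<close>, so the lower bound extends
  with constant sign to a neighbourhood of fixed radius.\<close>
lemma derivative_separated_exists:
  assumes H: "condH b lam \<phi>"
  obtains K \<delta> \<eta> where "\<delta> > 0" "\<eta> > 0" "derivative_separated K \<delta> \<eta>"
proof -
  obtain \<delta> K where \<delta>: "\<delta> > 0"
    and K: "\<And>u v x. (u, v, x) \<in> first_digit_pairs b \<Longrightarrow> \<exists>k\<le>K. \<delta> \<le> \<bar>Y_gap k u v x\<bar>"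
    by (rule uniform_derivative_lower_bound[OF H]) blast
  define H' where "H' = (\<Sum>k\<le>K. gap_bound (Suc k)) + 1"
  have H': "H' > 0" unfolding H'_def by (simp add: sum_nonneg gap_bound_nonneg add_nonneg_pos)
  have Lip: "\<bar>Y_gap (Suc k) u v z\<bar> \<le> H'" if "k \<le> K" for k u v z
  proof -
    have "gap_bound (Suc k) \<le> (\<Sum>k\<le>K. gap_bound (Suc k))"
      by (rule member_le_sum[where f="\<lambda>k. gap_bound (Suc k)"]) (use that gap_bound_nonneg in auto)
    thus ?thesis using Y_gap_bound[of "Suc k" u v z] unfolding H'_def by linarith
  qed
  define \<eta> where "\<eta> = \<delta> / (2 * H')"
  have sep: "derivative_separated K (\<delta> / 2) \<eta>"
    unfolding derivative_separated_def
  proof (intro allI impI)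
    fix u v x assume "(u, v, x) \<in> first_digit_pairs b"
    then obtain k where k: "k \<le> K" "\<delta> \<le> \<bar>Y_gap k u v x\<bar>" using K by blast
    define sg :: real where "sg = (if Y_gap k u v x \<ge> 0 then 1 else -1)"
    have "\<delta> / 2 \<le> sg * Y_gap k u v z" if z: "\<bar>z - x\<bar> \<le> \<eta>" for z
    proof -
      have "\<bar>Y_gap k u v z - Y_gap k u v x\<bar> \<le> H' * \<bar>z - x\<bar>"
        by (rule DERIV_abs_diff_le[OF Y_gap_deriv is_interval_univ]) (use Lip k in auto)
      also have "\<dots> \<le> \<delta> / 2" using z H' by (simp add: \<eta>_def field_simps)
      finally show ?thesis using k(2) by (auto simp: sg_def split: if_splits; linarith)
    qed
    moreover have "sg = 1 \<or> sg = -1" by (simp add: sg_def)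
    ultimately show "\<exists>k\<le>K. \<exists>sg::real. (sg = 1 \<or> sg = -1) \<and> (\<forall>z. \<bar>z - x\<bar> \<le> \<eta> \<longrightarrow> \<delta> / 2 \<le> sg * Y_gap k u v z)"
      using k(1) by blast
  qed
  have "\<delta> / 2 > 0" "\<eta> > 0" using \<delta> H' by (simp_all add: \<eta>_def)
  from that[OF this sep] show thesis .
qed

lemma Y_gap_agree_bound:
  assumes "\<And>k. 1 \<le> k \<Longrightarrow> k \<le> p \<Longrightarrow> u k = v k"
  shows "\<bar>Y_gap j u v x\<bar> \<le> scale p j * gap_bound j"
proof -
  let ?y = "(x + digit_value b u p) / real b ^ p"
  have "\<bar>Y_gap j u v x\<bar> = scale p j * \<bar>Y_gap j (shift_seq p u) (shift_seq p v) ?y\<bar>"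
    using Y_gap_rescale[where p=p and u=u and v=v and j=j and x=x, OF assms] scale_pos[of p j]
    by (simp add: abs_mult)
  also have "\<dots> \<le> scale p j * gap_bound j"
    using scale_pos[of p j] by (intro mult_left_mono Y_gap_bound) auto
  finally show ?thesis .
qed

lemma derivative_lower_bound_on_interval:
  assumes sep: "derivative_separated K \<delta> \<eta>" and u: "u \<in> Sigma b" and v: "v \<in> Sigma b"
    and agree: "\<And>k. 1 \<le> k \<Longrightarrow> k \<le> p \<Longrightarrow> u k = v k" and differ: "u (Suc p) \<noteq> v (Suc p)"
    and a: "0 \<le> a" "a + L \<le> 1" and L: "0 \<le> L" "L \<le> \<eta>"
  shows "\<exists>k\<le>K. \<exists>sg::real. (sg = 1 \<or> sg = -1) \<and> (\<forall>z\<in>{a..a+L}. scale p k * \<delta> \<le> sg * Y_gap k u v z)"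
proof -
  define y where "y x = (x + digit_value b u p) / real b ^ p" for x
  have bp: "real b ^ p \<ge> 1" using b_ge_2 by (simp add: one_le_power)
  have "y a \<in> {0..1}"
    using digit_value_bounds[OF u, of p] a L bp by (auto simp: y_def divide_le_eq_1)
  hence "(shift_seq p u, shift_seq p v, y a) \<in> first_digit_pairs b"
    using shift_seq_Sigma[OF u] shift_seq_Sigma[OF v] differ by (simp add: first_digit_pairs_def shift_seq_def)
  then obtain k sg where k: "k \<le> K" "sg = 1 \<or> sg = -1"
    and near: "\<And>z. \<bar>z - y a\<bar> \<le> \<eta> \<Longrightarrow> \<delta> \<le> sg * Y_gap k (shift_seq p u) (shift_seq p v) z"
    using sep unfolding derivative_separated_def by blast
  have "scale p k * \<delta> \<le> sg * Y_gap k u v z" if z: "z \<in> {a..a+L}" for z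
  proof -
    have "\<bar>y z - y a\<bar> = (z - a) / real b ^ p" using z by (simp add: y_def diff_divide_distrib[symmetric])
    also have "\<dots> \<le> z - a" using z bp by (simp add: divide_le_eq mult_le_cancel_left1 order_trans)
    also have "\<dots> \<le> \<eta>" using z L by simp
    finally have "scale p k * \<delta> \<le> scale p k * (sg * Y_gap k (shift_seq p u) (shift_seq p v) (y z))"
      using near scale_pos[of p k] by (intro mult_left_mono) auto
    thus ?thesis using Y_gap_rescale[where p=p and u=u and v=v and j=k and x=z, OF agree] by (simp add: y_def algebra_simps)
  qed
  thus ?thesis using k by blast
qed

lemma Y_gap_sup_lower_bound:
  assumes sep: "derivative_separated K \<delta> \<eta>" and \<delta>: "\<delta> > 0" and L: "0 < L" "L \<le> \<eta>" "L \<le> 1"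
    and u: "u \<in> Sigma b" and v: "v \<in> Sigma b" and pn: "p \<le> n"
    and agree: "\<And>k. 1 \<le> k \<Longrightarrow> k \<le> p \<Longrightarrow> u k = v k" and differ: "u (Suc p) \<noteq> v (Suc p)"
  shows "\<delta> * (L / (3 * 2 ^ K)) ^ K * real b powr (- real (Suc K * n)) \<le> (SUP x\<in>{0..<1}. \<bar>Y_gap 0 u v x\<bar>)"
proof -
  obtain k sg where k: "k \<le> K" "sg = 1 \<or> sg = -1" and lo: "\<forall>z\<in>{0..0+L}. scale p k * \<delta> \<le> sg * Y_gap k u v z"
    using derivative_lower_bound_on_interval[OF sep u v agree differ, of 0 L] L by auto
  define l where "l = L / (3 * 2 ^ K)"
  have "(1::real) \<le> 2 ^ K" by simp
  hence "1 \<le> 3 * (2::real) ^ K" by linarith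
  hence l: "0 < l" "l \<le> 1" using L unfolding l_def by (auto simp: field_simps)
  have "3 * 2 ^ k * l = L * (2 ^ k / 2 ^ K)" by (simp add: l_def)
  also have "\<dots> \<le> L"
    using L power_increasing[OF k(1), of "2::real"] by (intro mult_left_le) auto
  finally have "3 * 2 ^ k * l \<le> L" .
  moreover have "((\<lambda>x. sg * Y_gap i u v x) has_real_derivative sg * Y_gap (Suc i) u v x) (at x)" for i x
    by (intro DERIV_cmult Y_gap_deriv)
  ultimately have "\<exists>i::int. 0 \<le> of_int i * l \<and> (of_int i + 1) * l \<le> 0 + L \<and>
      (\<forall>x. of_int i * l \<le> x \<and> x < (of_int i + 1) * l \<longrightarrow> scale p k * \<delta> * l ^ k \<le> \<bar>sg * Y_gap 0 u v x\<bar>)"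
    using exists_cell_bounded_away[where f="\<lambda>i x. sg * Y_gap i u v x" and l=l and a=0 and w=L]
      l(1) lo scale_pos[of p k] \<delta> by simp
  then obtain i :: int where i: "0 \<le> of_int i * l" "(of_int i + 1) * l \<le> 0 + L"
    and cell: "\<forall>x. of_int i * l \<le> x \<and> x < (of_int i + 1) * l \<longrightarrow> scale p k * \<delta> * l ^ k \<le> \<bar>sg * Y_gap 0 u v x\<bar>"
    by blast
  have "real b powr (- real m) = (1 / real b) ^ m" for m
    using b_pos by (simp add: powr_minus powr_realpow power_one_over inverse_eq_divide)
  hence "real b powr (- real (Suc K * n)) = (1 / real b) ^ (Suc K * n)" .
  also have "\<dots> \<le> (1 / real b) ^ (Suc K * p)"
    using b_ge_2 pn by (intro power_decreasing mult_le_mono2) auto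
  finally have "\<delta> * l ^ K * real b powr (- real (Suc K * n)) \<le> scale p K * \<delta> * l ^ K"
    using scale_ge[of K p] \<delta> l by (simp add: mult_ac mult_left_mono)
  also have "\<dots> \<le> scale p k * \<delta> * l ^ k"
    using scale_antimono[OF k(1), of p] power_decreasing[OF k(1), of l] l \<delta> scale_pos[of p K] scale_pos[of p k]
    by (intro mult_mono) auto
  also have "\<dots> \<le> \<bar>Y_gap 0 u v (of_int i * l)\<bar>"
    using cell k(2) l(1) by (auto simp: abs_mult)
  also have "\<dots> \<le> (SUP x\<in>{0..<1}. \<bar>Y_gap 0 u v x\<bar>)"
    using i l L Y_gap_bound[of 0 u v]
    by (intro cSUP_upper bdd_aboveI[of _ "gap_bound 0"]) (auto simp: algebra_simps)
  finally show ?thesis by (simp add: l_def)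
qed

lemma Y_gap_derivative_dominating:
  assumes sep: "derivative_separated K \<delta> \<eta>" and \<delta>: "\<delta> > 0" and L: "0 < L" "L \<le> \<eta>" "L \<le> 1"
    and C: "1 \<le> C" "gap_bound (Suc K) < C * \<delta>" and u: "u \<in> Sigma b" and v: "v \<in> Sigma b"
    and agree: "\<And>k. 1 \<le> k \<Longrightarrow> k \<le> p \<Longrightarrow> u k = v k" and differ: "u (Suc p) \<noteq> v (Suc p)"
    and a: "0 \<le> a" "a + L \<le> 1"
  shows "\<exists>j\<le>K. \<exists>p0 w V sg. (sg = 1 \<or> sg = -1) \<and> a \<le> p0 \<and> p0 + w \<le> a + L \<and> L / (2 * C) \<le> w \<and>
           (\<forall>t\<in>{a..a+L}. \<bar>Y_gap 0 u v t\<bar> \<le> V) \<and> (\<forall>t\<in>{p0..p0+w}. V / 2 \<le> sg * Y_gap j u v t)"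
proof -
  obtain k sg where k: "k \<le> K" "sg = 1 \<or> sg = -1"
    and lo: "\<forall>z\<in>{a..a+L}. scale p k * \<delta> \<le> sg * Y_gap k u v z"
    using derivative_lower_bound_on_interval[OF sep u v agree differ a] L by auto
  have pos: "scale p k * \<delta> > 0" using scale_pos[of p k] \<delta> by simp
  have lo': "scale p k * \<delta> \<le> \<bar>Y_gap k u v z\<bar>" if "z \<in> {a..a+L}" for z
    using lo[rule_format, OF that] k(2) pos by (auto simp: abs_if)
  have hi: "\<bar>Y_gap (Suc K) u v z\<bar> < C * (scale p k * \<delta>)" for z
  proof -
    have "\<bar>Y_gap (Suc K) u v z\<bar> \<le> scale p (Suc K) * gap_bound (Suc K)" by (rule Y_gap_agree_bound[OF agree])
    also have "\<dots> \<le> scale p k * gap_bound (Suc K)"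
      using k(1) gap_bound_nonneg by (intro mult_right_mono scale_antimono) auto
    also have "\<dots> < scale p k * (C * \<delta>)" using C(2) scale_pos by simp
    finally show ?thesis by (simp add: mult_ac)
  qed
  show ?thesis
    by (rule exists_derivative_dominating[where f="\<lambda>i. Y_gap i u v" and a=a,
          OF Y_gap_deriv L(1,3) C(1) k(1) pos]) (use lo' hi in auto)
qed

lemma Y_gap_large_on_cell:
  assumes sep: "derivative_separated K \<delta> \<eta>" and \<delta>: "\<delta> > 0" and L: "0 < L" "L \<le> \<eta>" "L \<le> 1"
    and C: "1 \<le> C" "gap_bound (Suc K) < C * \<delta>" and cells: "3 * 2 ^ K / real b ^ l0 \<le> L / (2 * C)"
    and u: "u \<in> Sigma b" and v: "v \<in> Sigma b"
    and agree: "\<And>k. 1 \<le> k \<Longrightarrow> k \<le> p \<Longrightarrow> u k = v k" and differ: "u (Suc p) \<noteq> v (Suc p)"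
    and xs: "xs \<in> {0..1}" "Y_gap 0 u v xs \<noteq> 0"
  shows "\<exists>i::int. 0 \<le> i \<and> of_int i + 1 \<le> real (b ^ l0) \<and>
    (\<forall>x. of_int i / real (b ^ l0) \<le> x \<longrightarrow> x < (of_int i + 1) / real (b ^ l0) \<longrightarrow>
       (1 / real b ^ l0) ^ K / 2 * \<bar>Y_gap 0 u v xs\<bar> \<le> \<bar>Y_gap 0 u v x\<bar>)"
proof -
  define l where "l = 1 / real b ^ l0"
  have l: "0 < l" "l \<le> 1" "l = 1 / real (b ^ l0)" using b_ge_2 by (simp_all add: l_def one_le_power)
  define a where "a = min xs (1 - L)"
  have a: "0 \<le> a" "a + L \<le> 1" "xs \<in> {a..a+L}" using xs L by (auto simp: a_def)
  have "\<exists>j\<le>K. \<exists>p0 w V sg. (sg = 1 \<or> sg = -1) \<and> a \<le> p0 \<and> p0 + w \<le> a + L \<and> L / (2 * C) \<le> w \<and>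
      (\<forall>t\<in>{a..a+L}. \<bar>Y_gap 0 u v t\<bar> \<le> V) \<and> (\<forall>t\<in>{p0..p0+w}. V / 2 \<le> sg * Y_gap j u v t)"
    by (rule Y_gap_derivative_dominating[OF sep \<delta> L C u v _ differ a(1,2)]) (fact agree)
  then obtain j p0 w V sg where j: "j \<le> K" "sg = 1 \<or> sg = -1" "a \<le> p0" "p0 + w \<le> a + L"
    "L / (2 * C) \<le> w" and V: "\<forall>t\<in>{a..a+L}. \<bar>Y_gap 0 u v t\<bar> \<le> V"
    and near: "\<forall>t\<in>{p0..p0+w}. V / 2 \<le> sg * Y_gap j u v t"
    by (elim exE conjE) blast
  have SV: "0 < \<bar>Y_gap 0 u v xs\<bar>" "\<bar>Y_gap 0 u v xs\<bar> \<le> V" using V a(3) xs(2) by auto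
  have "3 * 2 ^ j * l \<le> 3 * 2 ^ K * l"
    using j(1) l by (intro mult_right_mono mult_left_mono power_increasing) auto
  also have "\<dots> \<le> w" using cells j(5) by (simp add: l_def)
  finally have width: "3 * 2 ^ j * l \<le> w" .
  have "((\<lambda>x. sg * Y_gap i u v x) has_real_derivative sg * Y_gap (Suc i) u v x) (at x)" for i x
    by (intro DERIV_cmult Y_gap_deriv)
  hence "\<exists>i::int. p0 \<le> of_int i * l \<and> (of_int i + 1) * l \<le> p0 + w \<and>
      (\<forall>x. of_int i * l \<le> x \<and> x < (of_int i + 1) * l \<longrightarrow> V / 2 * l ^ j \<le> \<bar>sg * Y_gap 0 u v x\<bar>)"
    by (rule exists_cell_bounded_away[where f="\<lambda>i x. sg * Y_gap i u v x" and a=p0, OF _ l(1) _ width])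
       (use SV near in auto)
  then obtain i :: int where i: "p0 \<le> of_int i * l" "(of_int i + 1) * l \<le> p0 + w"
    and cell: "\<forall>x. of_int i * l \<le> x \<and> x < (of_int i + 1) * l \<longrightarrow> V / 2 * l ^ j \<le> \<bar>sg * Y_gap 0 u v x\<bar>"
    by blast
  have "0 \<le> of_int i * l" using i(1) j(3) a(1) by linarith
  hence "0 \<le> i" using l(1) by (simp add: zero_le_mult_iff)
  moreover have "(of_int i + 1) * l \<le> 1" using i(2) j(4) a(2) by linarith
  hence "of_int i + 1 \<le> real (b ^ l0)" using b_pos by (simp add: l(3) field_simps)
  moreover have "l ^ K * \<bar>Y_gap 0 u v xs\<bar> \<le> l ^ j * V"
    using SV power_decreasing[OF j(1), of l] l(1,2) by (intro mult_mono) auto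
  hence "l ^ K / 2 * \<bar>Y_gap 0 u v xs\<bar> \<le> V / 2 * l ^ j" by (simp add: mult.commute)
  ultimately show ?thesis using cell j(2) l by (intro exI[of _ i]) (auto simp: abs_mult)
qed

lemma Y_gap_cell_sum_lower_bound:
  assumes sep: "derivative_separated K \<delta> \<eta>" and \<delta>: "\<delta> > 0" and L: "0 < L" "L \<le> \<eta>" "L \<le> 1"
    and C: "1 \<le> C" "gap_bound (Suc K) < C * \<delta>" and cells: "3 * 2 ^ K / real b ^ l0 \<le> L / (2 * C)"
    and u: "u \<in> Sigma b" and v: "v \<in> Sigma b"
    and agree: "\<And>k. 1 \<le> k \<Longrightarrow> k \<le> p \<Longrightarrow> u k = v k" and differ: "u (Suc p) \<noteq> v (Suc p)"
  shows "(1 / real b ^ l0) ^ K / 2 * (SUP x\<in>{0..1}. \<bar>Y_gap 0 u v x\<bar>)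
    \<le> (\<Sum>i<b ^ l0. INF x\<in>{real i / real b ^ l0 ..< real (i + 1) / real b ^ l0}. \<bar>Y_gap 0 u v x\<bar>)"
proof -
  have N: "b ^ l0 > 0" using b_pos by simp
  have "continuous_on {0..1} (Y_gap 0 u v)"
    by (rule continuous_at_imp_continuous_on) (use Y_gap_deriv DERIV_isCont in blast)
  hence cont: "continuous_on {0..1} (\<lambda>x. \<bar>Y_gap 0 u v x\<bar>)" by (intro continuous_intros)
  obtain xs where xs: "xs \<in> {0..1}" "\<And>y. y \<in> {0..1} \<Longrightarrow> \<bar>Y_gap 0 u v y\<bar> \<le> \<bar>Y_gap 0 u v xs\<bar>"
    using continuous_attains_sup[OF compact_Icc _ cont] by auto
  have "(SUP x\<in>{0..1}. \<bar>Y_gap 0 u v x\<bar>) \<le> \<bar>Y_gap 0 u v xs\<bar>"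
    by (rule cSUP_least) (use xs in auto)
  hence "(1 / real b ^ l0) ^ K / 2 * (SUP x\<in>{0..1}. \<bar>Y_gap 0 u v x\<bar>)
      \<le> (1 / real b ^ l0) ^ K / 2 * \<bar>Y_gap 0 u v xs\<bar>"
    using b_pos by (intro mult_left_mono) auto
  also have "\<dots> \<le> (\<Sum>i<b ^ l0. INF x\<in>{real i / real (b ^ l0) ..< real (i + 1) / real (b ^ l0)}. \<bar>Y_gap 0 u v x\<bar>)"
  proof (cases "Y_gap 0 u v xs = 0")
    case True
    thus ?thesis using sum_cell_infima_ge[OF N, of 0 0 "Y_gap 0 u v"] b_pos by simp
  next
    case False
    then obtain i where "0 \<le> i" "of_int i + 1 \<le> real (b ^ l0)"
      "\<And>x. of_int i / real (b ^ l0) \<le> x \<Longrightarrow> x < (of_int i + 1) / real (b ^ l0) \<Longrightarrow>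
         (1 / real b ^ l0) ^ K / 2 * \<bar>Y_gap 0 u v xs\<bar> \<le> \<bar>Y_gap 0 u v x\<bar>"
      using Y_gap_large_on_cell[OF sep \<delta> L C cells u v _ differ xs(1) False] agree by blast
    thus ?thesis by (rule sum_cell_infima_ge[OF N])
  qed
  finally show ?thesis by (simp only: of_nat_power)
qed

lemma Y_gap_sup_nonneg: "0 \<le> (SUP x\<in>{0..1}. \<bar>Y_gap 0 u v x\<bar>)"
proof -
  have "\<bar>Y_gap 0 u v 0\<bar> \<le> (SUP x\<in>{0..1}. \<bar>Y_gap 0 u v x\<bar>)"
    using Y_gap_bound[of 0 u v] by (intro cSUP_upper bdd_aboveI[of _ "gap_bound 0"]) auto
  thus ?thesis by linarith
qed

lemma Y_gap_estimates:
  assumes H: "condH b lam \<phi>"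
  shows "\<exists>l0 Q0 :: nat. \<exists>\<rho>0 :: real. l0 > 0 \<and> Q0 > 0 \<and> \<rho>0 > 0 \<and>
    (\<forall>n\<ge>1. \<forall>u\<in>Sigma b. \<forall>v\<in>Sigma b. u n \<noteq> v n \<longrightarrow>
       (SUP x\<in>{0..<1}. \<bar>Y_gap 0 u v x\<bar>) \<ge> \<rho>0 * real b powr (- real (Q0 * n))
     \<and> (\<Sum>i<b ^ l0. (INF x\<in>{real i / real b ^ l0 ..< real (i + 1) / real b ^ l0}. \<bar>Y_gap 0 u v x\<bar>))
         \<ge> \<rho>0 * (SUP x\<in>{0..1}. \<bar>Y_gap 0 u v x\<bar>))"
proof -
  obtain K \<delta> \<eta> where \<delta>: "\<delta> > 0" and \<eta>: "\<eta> > 0" and sep: "derivative_separated K \<delta> \<eta>"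
    by (rule derivative_separated_exists[OF H]) blast
  define L where "L = min \<eta> 1"
  have L: "0 < L" "L \<le> \<eta>" "L \<le> 1" using \<eta> by (auto simp: L_def)
  define C where "C = gap_bound (Suc K) / \<delta> + 1"
  have C: "1 \<le> C" "gap_bound (Suc K) < C * \<delta>"
    using \<delta> gap_bound_nonneg[of "Suc K"] by (auto simp: C_def field_simps)
  text \<open>\<open>l0\<close> is chosen so that \<open>3 2^K\<close> cells of level \<open>l0\<close> fit into any interval of length
    \<open>L / (2 C)\<close>, as required by \<open>Y_gap_large_on_cell\<close>.\<close>
  define r where "r = L / (2 * C * (3 * 2 ^ K))"
  have "1 * 1 \<le> C * 2 ^ K" using C(1) by (intro mult_mono) auto
  hence "L < 2 * C * (3 * 2 ^ K)" using L by linarith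
  hence r: "0 < r" "r < 1" using L by (simp_all add: r_def)
  obtain l0 where l0: "(1 / real b) ^ l0 < r"
    using real_arch_pow_inv[OF r(1), of "1 / real b"] b_ge_2 by auto
  have "l0 > 0" using l0 r(2) by (cases l0) auto
  have cells: "3 * 2 ^ K / real b ^ l0 \<le> L / (2 * C)"
    using l0 C by (simp add: r_def power_one_over field_simps)
  define \<rho>0 where "\<rho>0 = min (\<delta> * (L / (3 * 2 ^ K)) ^ K) ((1 / real b ^ l0) ^ K / 2)"
  have "\<rho>0 > 0" using \<delta> L b_pos by (simp add: \<rho>0_def)
  moreover have "(SUP x\<in>{0..<1}. \<bar>Y_gap 0 u v x\<bar>) \<ge> \<rho>0 * real b powr (- real (Suc K * n))
     \<and> (\<Sum>i<b ^ l0. (INF x\<in>{real i / real b ^ l0 ..< real (i + 1) / real b ^ l0}. \<bar>Y_gap 0 u v x\<bar>))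
         \<ge> \<rho>0 * (SUP x\<in>{0..1}. \<bar>Y_gap 0 u v x\<bar>)"
    if u: "u \<in> Sigma b" and v: "v \<in> Sigma b" and uv: "u n \<noteq> v n" for n u v
  proof
    obtain p where p: "p < n" and agree: "\<And>k. 1 \<le> k \<Longrightarrow> k \<le> p \<Longrightarrow> u k = v k"
      and differ: "u (Suc p) \<noteq> v (Suc p)"
      by (rule first_difference[OF u v uv]) blast
    have "\<rho>0 * real b powr (- real (Suc K * n))
        \<le> \<delta> * (L / (3 * 2 ^ K)) ^ K * real b powr (- real (Suc K * n))"
      by (intro mult_right_mono) (auto simp: \<rho>0_def)
    also have "\<dots> \<le> (SUP x\<in>{0..<1}. \<bar>Y_gap 0 u v x\<bar>)"
      using p by (intro Y_gap_sup_lower_bound[OF sep \<delta> L u v _ agree differ]) simp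
    finally show "(SUP x\<in>{0..<1}. \<bar>Y_gap 0 u v x\<bar>) \<ge> \<rho>0 * real b powr (- real (Suc K * n))" .
    have "\<rho>0 * (SUP x\<in>{0..1}. \<bar>Y_gap 0 u v x\<bar>) \<le> (1 / real b ^ l0) ^ K / 2 * (SUP x\<in>{0..1}. \<bar>Y_gap 0 u v x\<bar>)"
      using Y_gap_sup_nonneg by (intro mult_right_mono) (auto simp: \<rho>0_def)
    also have "\<dots> \<le> (\<Sum>i<b ^ l0. (INF x\<in>{real i / real b ^ l0 ..< real (i + 1) / real b ^ l0}. \<bar>Y_gap 0 u v x\<bar>))"
      by (rule Y_gap_cell_sum_lower_bound[OF sep \<delta> L C cells u v agree differ])
    finally show "(\<Sum>i<b ^ l0. (INF x\<in>{real i / real b ^ l0 ..< real (i + 1) / real b ^ l0}. \<bar>Y_gap 0 u v x\<bar>))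
         \<ge> \<rho>0 * (SUP x\<in>{0..1}. \<bar>Y_gap 0 u v x\<bar>)" .
  qed
  ultimately show ?thesis using \<open>l0 > 0\<close> by (intro exI[of _ l0] exI[of _ "Suc K"] exI[of _ \<rho>0]) auto
qed

end

theorem mainTheorem15:
  fixes b :: nat and lam :: real and \<phi> :: "real \<Rightarrow> real"
  assumes "b \<ge> 2"
    and "1 / real b < lam" and "lam < 1"
    and "real_analytic_on UNIV \<phi>"
    and "\<forall>x. \<phi> (x + 1) = \<phi> x"
    and "condH b lam \<phi>"
  shows "\<exists>l0 Q0 :: nat. \<exists>\<rho>0 :: real. l0 > 0 \<and> Q0 > 0 \<and> \<rho>0 > 0 \<and>
    (\<forall>n\<ge>1. \<forall>u\<in>Sigma b. \<forall>v\<in>Sigma b. u n \<noteq> v n \<longrightarrow>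
       (SUP x\<in>{0..<1}. \<bar>Yfun b lam \<phi> x u - Yfun b lam \<phi> x v\<bar>) \<ge> \<rho>0 * real b powr (- real (Q0 * n))
     \<and> (\<Sum>i<b ^ l0. (INF x\<in>{real i / real b ^ l0 ..< real (i + 1) / real b ^ l0}.
            \<bar>Yfun b lam \<phi> x u - Yfun b lam \<phi> x v\<bar>))
         \<ge> \<rho>0 * (SUP x\<in>{0..1}. \<bar>Yfun b lam \<phi> x u - Yfun b lam \<phi> x v\<bar>))"
proof -
  have per: "\<And>x. \<phi> (x + 1) = \<phi> x" using assms(5) by simp
  obtain M R where "M > 0" "R > 0" "\<And>j x. \<bar>(deriv ^^ j) \<phi> x\<bar> \<le> M * fact j / R ^ j"
    and "\<And>j x. ((deriv ^^ j) \<phi> has_real_derivative (deriv ^^ Suc j) \<phi> x) (at x)"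
    by (rule analytic_periodic_Cauchy_estimates[OF assms(4) per]) blast
  then interpret Y_family b lam \<phi> M R
    using assms(1-3) by unfold_locales
  have "\<bar>Yfun b lam \<phi> x u - Yfun b lam \<phi> x v\<bar> = \<bar>Y_gap 0 u v x\<bar>" for x u v
    by (simp add: Y_gap_def Y_deriv_0_eq_Yfun)
  thus ?thesis using Y_gap_estimates[OF assms(6)] by simp
qed

end
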